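(* (1) $(e-r-1)(r-1)\le rk-e+1\le b-\sum_{i\in A}(r-r_i)\le k(r-1)$. (2) $b=(k-1)(r-1)+\sum_{i\in A}(r-r_i)$ if and only if $\sum_{i\in B}r_i=e-1$ and $k=e-r$. (3) $b=k(r-1)+\sum_{i\in A}(r-r_i)$ if and only if $r_i=1$ for every $i\in B$. (4) The following are equivalent: (a) $b=(e-r-1)(r-1)$; (b) $b=(k-1)(r-1)$; (c) $e-r=k$, $\sum_{i\in B}r_i=e-1$ and $r_i=r$ for every $i\in A$. If these hold, then $s_{i_0-1}=c-e$. (5) $b\ge(r-1)s$, where $s=|\{i\in\{1,\dots,n\}:r_i=1\}|$.
   Context: Let $(R,\mathfrak m)$ be a one-dimensional local Noetherian domain with quotient field $K$, not regular, analytically irreducible (the integral closure $\overline R$ of $R$ in $K$ is a DVR and a finite $R$-module) and residually rational. Let $v$ be the valuation of $\overline R$ normalized so a uniformizer $t$ has value 1, $v(R)=\{v(a):a\in R\setminus\{0\}\}$, $\mathfrak C=(R:_K\overline R)=t^c\overline R$ with $c$ the least element of $v(R)$ with $c+\mathbb N\subseteq v(R)$, $\delta=\ell_R(\overline R/R)$, $r=\ell_R((R:_K\mathfrak m)/R)$, $b=(c-\delta)r-\delta$, $e$ the least positive element of $v(R)$, $n=c-\delta$. Write $v(R)=\{s_0=0<s_1<\cdots\}$ ($s_n=c$), $R_i=\{a\in R:v(a)\ge s_i\}$, $r_i=\ell_R((R:_KR_i)/(R:_KR_{i-1}))$. Let $i_0\in[1,n]$ with $s_{i_0-1}=\min\{y\in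 v(R):y\ge c-e\}$, $B=\{i_0,\dots,n\}$, $A=\{1,\dots,n\}\setminus B$. Let $x\in\mathfrak m$ with $v(x)=e$ and $k=\ell_R(R/(\mathfrak C+xR))$. *)

theory Defs
  imports Main "HOL-Library.Infinite_Set"
begin

text \<open>The ambient quotient field K is the type 'a (class field); the ring R is a subset of it.
All modules occurring are R-submodules of K, so lengths of quotients M/N (N \<subseteq> M)
are computed as maximal lengths of strict chains of R-submodules of K from N to M.\<close>

definition Rsubmod :: "'a::field set \<Rightarrow> 'a set \<Rightarrow> bool" where
  "Rsubmod R M \<longleftrightarrow> 0 \<in> M \<and> (\<forall>x\<in>M. \<forall>y\<in>M. x + y \<in> M) \<and> (\<forall>a\<in>R. \<forall>x\<in>M. a * x \<in> M)"

definition len :: "'a::field set \<Rightarrow> 'a set \<Rightarrow> 'a set \<Rightarrow> nat" where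
  "len R N M = Sup {n. \<exists>L::nat \<Rightarrow> 'a set. L 0 = N \<and> L n = M \<and>
        (\<forall>i\<le>n. Rsubmod R (L i)) \<and> (\<forall>i<n. L i \<subset> L (Suc i))}"

definition subring :: "'a::field set \<Rightarrow> bool" where
  "subring R \<longleftrightarrow> 0 \<in> R \<and> 1 \<in> R \<and> (\<forall>x\<in>R. \<forall>y\<in>R. x + y \<in> R \<and> x * y \<in> R \<and> - x \<in> R)"

definition quot_field :: "'a::field set \<Rightarrow> bool" where
  "quot_field R \<longleftrightarrow> (\<forall>z. \<exists>a\<in>R. \<exists>b\<in>R. b \<noteq> 0 \<and> z = a / b)"

definition ideal_of :: "'a::field set \<Rightarrow> 'a set \<Rightarrow> bool" where
  "ideal_of R I \<longleftrightarrow> I \<subseteq> R \<and> Rsubmod R I"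

definition Rspan :: "'a::field set \<Rightarrow> 'a set \<Rightarrow> 'a set" where
  "Rspan R F = {\<Sum>f\<in>F. c f * f | c. \<forall>f\<in>F. c f \<in> R}"

definition noetherian :: "'a::field set \<Rightarrow> bool" where
  "noetherian R \<longleftrightarrow> (\<forall>I. ideal_of R I \<longrightarrow> (\<exists>F. finite F \<and> F \<subseteq> I \<and> I = Rspan R F))"

definition max_ideal :: "'a::field set \<Rightarrow> 'a set" where
  "max_ideal R = {x\<in>R. x = 0 \<or> inverse x \<notin> R}"

definition local_ring :: "'a::field set \<Rightarrow> bool" where
  "local_ring R \<longleftrightarrow> ideal_of R (max_ideal R)"

definition prime_ideal :: "'a::field set \<Rightarrow> 'a set \<Rightarrow> bool" where
  "prime_ideal R P \<longleftrightarrow> ideal_of R P \<and> P \<noteq> R \<and> (\<forall>a\<in>R. \<forall>b\<in>R. a * b \<in> P \<longrightarrow> a \<in> P \<or> b \<in> P)"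

definition dim_one :: "'a::field set \<Rightarrow> bool" where
  "dim_one R \<longleftrightarrow> max_ideal R \<noteq> {0} \<and> (\<forall>P. prime_ideal R P \<and> P \<noteq> {0} \<longrightarrow> P = max_ideal R)"

text \<open>A one-dimensional local ring is regular iff its maximal ideal is principal.\<close>
definition regular_dim1 :: "'a::field set \<Rightarrow> bool" where
  "regular_dim1 R \<longleftrightarrow> (\<exists>t\<in>R. max_ideal R = Rspan R {t})"

definition integral_closure :: "'a::field set \<Rightarrow> 'a set" where
  "integral_closure R = {z. \<exists>n c. (\<forall>i<n. c i \<in> R) \<and> z ^ n + (\<Sum>i<n. c i * z ^ i) = 0}"

text \<open>A normalized discrete valuation of K (value of 0 irrelevant, v(0)=\<infinity> by convention).\<close>
definition normalized_valuation :: "('a::field \<Rightarrow> int) \<Rightarrow> bool" where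
  "normalized_valuation v \<longleftrightarrow>
     (\<forall>a b. a \<noteq> 0 \<longrightarrow> b \<noteq> 0 \<longrightarrow> v (a * b) = v a + v b) \<and>
     (\<forall>a b. a \<noteq> 0 \<longrightarrow> b \<noteq> 0 \<longrightarrow> a + b \<noteq> 0 \<longrightarrow> v (a + b) \<ge> min (v a) (v b)) \<and>
     (\<exists>t. t \<noteq> 0 \<and> v t = 1)"

definition valuation_ring :: "('a::field \<Rightarrow> int) \<Rightarrow> 'a set" where
  "valuation_ring v = {z. z = 0 \<or> v z \<ge> 0}"

definition valuation_max_ideal :: "('a::field \<Rightarrow> int) \<Rightarrow> 'a set" where
  "valuation_max_ideal v = {z. z = 0 \<or> v z > 0}"

text \<open>Standing hypotheses: R is a one-dimensional local Noetherian domain with quotient field K,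
not regular, whose integral closure is the DVR with normalized valuation v and is a finite
R-module, and residually rational (R/m \<rightarrow> Rbar/mbar surjective).\<close>
definition setting :: "'a::field set \<Rightarrow> ('a \<Rightarrow> int) \<Rightarrow> bool" where
  "setting R v \<longleftrightarrow> subring R \<and> quot_field R \<and> noetherian R \<and> local_ring R \<and> dim_one R \<and>
     \<not> regular_dim1 R \<and> normalized_valuation v \<and> integral_closure R = valuation_ring v \<and>
     (\<exists>F. finite F \<and> integral_closure R = Rspan R F) \<and>
     (\<forall>u\<in>integral_closure R. \<exists>a\<in>R. u - a \<in> valuation_max_ideal v)"

definition vR :: "'a::field set \<Rightarrow> ('a \<Rightarrow> int) \<Rightarrow> nat set" where
  "vR R v = (\<lambda>a. nat (v a)) ` (R - {0})"

definition cond :: "'a::field set \<Rightarrow> ('a \<Rightarrow> int) \<Rightarrow> nat" where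
  "cond R v = (LEAST c. c \<in> vR R v \<and> (\<forall>j. c + j \<in> vR R v))"

definition colon :: "'a::field set \<Rightarrow> 'a set \<Rightarrow> 'a set" where
  "colon M N = {z. \<forall>y\<in>N. z * y \<in> M}"

definition conductor :: "'a::field set \<Rightarrow> 'a set" where
  "conductor R = colon R (integral_closure R)"

definition delta :: "'a::field set \<Rightarrow> nat" where
  "delta R = len R R (integral_closure R)"

definition ctype :: "'a::field set \<Rightarrow> nat" where
  "ctype R = len R R (colon R (max_ideal R))"

definition bb :: "'a::field set \<Rightarrow> ('a \<Rightarrow> int) \<Rightarrow> int" where
  "bb R v = (int (cond R v) - int (delta R)) * int (ctype R) - int (delta R)"

definition mult_e :: "'a::field set \<Rightarrow> ('a \<Rightarrow> int) \<Rightarrow> nat" where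
  "mult_e R v = (LEAST y. y \<in> vR R v \<and> y > 0)"

definition nn :: "'a::field set \<Rightarrow> ('a \<Rightarrow> int) \<Rightarrow> nat" where
  "nn R v = cond R v - delta R"

text \<open>s i = the i-th element (from 0) of v(R) in increasing order.\<close>
definition sv :: "'a::field set \<Rightarrow> ('a \<Rightarrow> int) \<Rightarrow> nat \<Rightarrow> nat" where
  "sv R v i = enumerate (vR R v) i"

definition Rfilt :: "'a::field set \<Rightarrow> ('a \<Rightarrow> int) \<Rightarrow> nat \<Rightarrow> 'a set" where
  "Rfilt R v i = {a\<in>R. a = 0 \<or> v a \<ge> int (sv R v i)}"

definition ri :: "'a::field set \<Rightarrow> ('a \<Rightarrow> int) \<Rightarrow> nat \<Rightarrow> nat" where
  "ri R v i = len R (colon R (Rfilt R v (i - 1))) (colon R (Rfilt R v i))"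

definition kk :: "'a::field set \<Rightarrow> 'a \<Rightarrow> nat" where
  "kk R x = len R {a + x * r | a r. a \<in> conductor R \<and> r \<in> R} R"

end

theory Submission
  imports Defs "HOL-Library.Set_Algebras"
begin

text \<open>Since \<open>R\<close> is residually rational, the length of a quotient \<open>M/N\<close> of \<open>R\<close>-submodules
  of \<open>K\<close> squeezed between two ideals \<open>t^a Rbar \<subseteq> N \<subseteq> M \<subseteq> t^b Rbar\<close> of the valuation
  ring is the number of values taken on \<open>M\<close> but not on \<open>N\<close>: each strict step of a chain gains
  a value, and adjoining the elements of the largest missing value gains exactly one.
  All invariants thereby become counts of integers: \<open>\<delta>\<close> counts the gaps of \<open>v(R)\<close>, the
  \<open>r_i\<close> count the values gained along the chain \<open>R = (R:R_0) \<subseteq> \<dots> \<subseteq> (R:R_n) = Rbar\<close>, so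
  \<open>b = \<Sum> (r - r_i)\<close>, and \<open>k\<close> counts the elements \<open>s_(i0-1), \<dots>, s_(n-1)\<close> of \<open>v(R)\<close> in
  \<open>[c - e, c)\<close>, i.e. \<open>k = |B|\<close>.  Moreover \<open>1 \<le> r_i \<le> r\<close> (multiplication by an element of
  value \<open>s_(i-1)\<close> embeds the \<open>i\<close>-th step into \<open>(R:m)/R\<close>), the \<open>r_i\<close> with \<open>i \<in> B\<close> add up to
  at most \<open>e - 1\<close> (since \<open>(R:R_(i0-1))\<close> already contains \<open>1\<close> and \<open>t^e Rbar\<close>), and \<open>e \<le> k + r\<close>
  (the gaps in \<open>[c - e, c)\<close> are values of \<open>(R:m)\<close>).  The five assertions follow from these
  facts by integer arithmetic.\<close>

section \<open>Counting and integer arithmetic\<close>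

lemma card_unshifted_eq_card_top:
  fixes S :: "nat set"
  assumes "e \<le> c" and shift: "\<And>y. y \<in> S \<Longrightarrow> y + e \<in> S"
  shows "card {y \<in> S. y < c \<and> \<not> (e \<le> y \<and> y - e \<in> S)} = card {y \<in> S. c - e \<le> y \<and> y < c}"
proof -
  define T where "T = {y \<in> S. y < c}"
  define T1 where "T1 = {y \<in> S. y < c \<and> \<not> (e \<le> y \<and> y - e \<in> S)}"
  define T2 where "T2 = {y \<in> S. y < c \<and> e \<le> y \<and> y - e \<in> S}"
  define T3 where "T3 = {y \<in> S. y < c - e}"
  define T4 where "T4 = {y \<in> S. c - e \<le> y \<and> y < c}"
  have "T2 = (\<lambda>y. y + e) ` T3"
  proof
    show "T2 \<subseteq> (\<lambda>y. y + e) ` T3"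
    proof
      fix y assume "y \<in> T2"
      then have "y - e \<in> T3" "y = y - e + e"
        unfolding T2_def T3_def by auto
      then show "y \<in> (\<lambda>y. y + e) ` T3"
        by blast
    qed
    show "(\<lambda>y. y + e) ` T3 \<subseteq> T2"
      unfolding T2_def T3_def using shift by auto
  qed
  then have "card T2 = card T3"
    by (simp add: card_image)
  moreover have "finite T"
    unfolding T_def by (rule finite_subset[of _ "{..<c}"]) auto
  moreover have "T = T1 \<union> T2" "T1 \<inter> T2 = {}" "T = T3 \<union> T4" "T3 \<inter> T4 = {}"
    unfolding T_def T1_def T2_def T3_def T4_def by auto
  ultimately have "card T1 + card T3 = card T3 + card T4"
    by (metis card_Un_disjoint finite_Un)
  then show ?thesis
    unfolding T1_def T4_def by simp
qed

lemma linear_bounds: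
  fixes b r e k SA SB :: int
  assumes b: "b = SA + k * r - SB" and "k \<le> SB" "SB \<le> e - 1" "e \<le> k + r" "1 \<le> r" "0 \<le> SA"
  shows "(e - r - 1) * (r - 1) \<le> r * k - e + 1" "r * k - e + 1 \<le> b - SA" "b - SA \<le> k * (r - 1)"
    and "b = (k - 1) * (r - 1) + SA \<longleftrightarrow> SB = e - 1 \<and> k = e - r"
    and "b = k * (r - 1) + SA \<longleftrightarrow> SB = k"
    and "b = (e - r - 1) * (r - 1) \<longleftrightarrow> b = (k - 1) * (r - 1)"
    and "b = (k - 1) * (r - 1) \<longleftrightarrow> e - r = k \<and> SB = e - 1 \<and> SA = 0"
proof -
  have e1: "(e - r - 1) * (r - 1) = e * r - e - r * r + 1"
    and e2: "(k - 1) * (r - 1) = k * r - k - r + 1"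
    and e3: "k * (r - 1) = k * r - k"
    by (simp_all add: algebra_simps)
  text \<open>The lower bound is the only nonlinear step: \<open>r * k - e + 1 - (e - r - 1) * (r - 1)\<close>
    equals \<open>r * (k - e + r)\<close>, which is at least \<open>k - e + r \<ge> 0\<close>.\<close>
  have "k - e + r \<le> r * (k - e + r)"
    using assms(4,5) mult_right_mono[of 1 r "k - e + r"] by simp
  moreover have "r * (k - e + r) = k * r - e * r + r * r"
    by (simp add: algebra_simps)
  ultimately have key: "k - e + r \<le> k * r - e * r + r * r"
    by simp
  have "(e - r - 1) * (r - 1) \<le> k * r - e + 1" "k * r - e + 1 \<le> b - SA"
    using assms key e1 by linarith+
  then show "(e - r - 1) * (r - 1) \<le> r * k - e + 1" "r * k - e + 1 \<le> b - SA"
    by (simp_all add: mult.commute)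
  show "b - SA \<le> k * (r - 1)"
    using assms e3 by linarith
  show "b = (k - 1) * (r - 1) + SA \<longleftrightarrow> SB = e - 1 \<and> k = e - r"
  proof
    assume "b = (k - 1) * (r - 1) + SA"
    then show "SB = e - 1 \<and> k = e - r"
      using assms e2 by linarith
  qed (use assms e2 in linarith)
  show "b = k * (r - 1) + SA \<longleftrightarrow> SB = k"
  proof
    assume "b = k * (r - 1) + SA"
    then show "SB = k"
      using assms e3 by linarith
  qed (use assms e3 in linarith)
  have tight: "k = e - r" if "b = (e - r - 1) * (r - 1) \<or> b = (k - 1) * (r - 1)"
    using that assms key e1 e2 by linarith
  then show "b = (e - r - 1) * (r - 1) \<longleftrightarrow> b = (k - 1) * (r - 1)"
    by (metis add_diff_cancel_left' diff_add_cancel)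
  show "b = (k - 1) * (r - 1) \<longleftrightarrow> e - r = k \<and> SB = e - 1 \<and> SA = 0"
  proof
    assume "b = (k - 1) * (r - 1)"
    then show "e - r = k \<and> SB = e - 1 \<and> SA = 0"
      using tight assms e2 by linarith
  next
    assume "e - r = k \<and> SB = e - 1 \<and> SA = 0"
    then show "b = (k - 1) * (r - 1)"
      using assms e2 by linarith
  qed
qed

lemma proposition_arith:
  fixes b r e k :: int and rr :: "nat \<Rightarrow> int" and A B N :: "nat set" and P :: bool
  assumes N: "finite N" "A \<union> B = N" "A \<inter> B = {}"
    and b: "b = (\<Sum>i\<in>N. r - rr i)"
    and rr: "\<And>i. i \<in> N \<Longrightarrow> 1 \<le> rr i \<and> rr i \<le> r"
    and k: "k = int (card B)"
    and "(\<Sum>i\<in>B. rr i) \<le> e - 1" "e \<le> k + r" "1 \<le> r"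
    and P: "(\<Sum>i\<in>B. rr i) = e - 1 \<Longrightarrow> P"
  shows
    "((e - r - 1) * (r - 1) \<le> r * k - e + 1 \<and>
      r * k - e + 1 \<le> b - (\<Sum>i\<in>A. r - rr i) \<and>
      b - (\<Sum>i\<in>A. r - rr i) \<le> k * (r - 1))
   \<and> (b = (k - 1) * (r - 1) + (\<Sum>i\<in>A. r - rr i) \<longleftrightarrow>
        (\<Sum>i\<in>B. rr i) = e - 1 \<and> k = e - r)
   \<and> (b = k * (r - 1) + (\<Sum>i\<in>A. r - rr i) \<longleftrightarrow> (\<forall>i\<in>B. rr i = 1))
   \<and> ((b = (e - r - 1) * (r - 1) \<longleftrightarrow> b = (k - 1) * (r - 1))
      \<and> (b = (k - 1) * (r - 1) \<longleftrightarrow>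
           e - r = k \<and> (\<Sum>i\<in>B. rr i) = e - 1 \<and> (\<forall>i\<in>A. rr i = r))
      \<and> (b = (e - r - 1) * (r - 1) \<longrightarrow> P))
   \<and> b \<ge> (r - 1) * int (card {i\<in>N. rr i = 1})"
proof -
  have fin: "finite A" "finite B"
    using N by auto
  define SA where "SA = (\<Sum>i\<in>A. r - rr i)"
  define SB where "SB = (\<Sum>i\<in>B. rr i)"
  have "b = SA + (\<Sum>i\<in>B. r - rr i)"
    unfolding b SA_def using sum.union_disjoint[OF fin N(3)] N(2) by simp
  then have b_split: "b = SA + k * r - SB"
    unfolding SB_def k by (simp add: sum_subtractf)
  have rrA: "\<And>i. i \<in> A \<Longrightarrow> 1 \<le> rr i \<and> rr i \<le> r"
    and rrB: "\<And>i. i \<in> B \<Longrightarrow> 1 \<le> rr i \<and> rr i \<le> r"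
    using rr unfolding N(2)[symmetric] by blast+
  have "(\<Sum>i\<in>B. rr i - 1) = SB - k"
    unfolding SB_def k by (simp add: sum_subtractf)
  moreover have "\<forall>i\<in>B. 0 \<le> rr i - 1"
    using rrB by fastforce
  ultimately have "k \<le> SB" and SB_eq: "SB = k \<longleftrightarrow> (\<forall>i\<in>B. rr i = 1)"
    using sum_nonneg[of B "\<lambda>i. rr i - 1"] sum_nonneg_eq_0_iff[OF fin(2), of "\<lambda>i. rr i - 1"] by auto
  have "\<forall>i\<in>A. 0 \<le> r - rr i"
    using rrA by fastforce
  then have "0 \<le> SA" and SA_eq: "SA = 0 \<longleftrightarrow> (\<forall>i\<in>A. rr i = r)"
    unfolding SA_def using sum_nonneg[of A "\<lambda>i. r - rr i"]
      sum_nonneg_eq_0_iff[OF fin(1), of "\<lambda>i. r - rr i"] by auto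
  note lin = linear_bounds[OF b_split \<open>k \<le> SB\<close> assms(7)[folded SB_def] assms(8,9) \<open>0 \<le> SA\<close>]
  have "(\<Sum>i\<in>{i\<in>N. rr i = 1}. r - rr i) \<le> b"
    unfolding b using rr N(1) by (intro sum_mono2) auto
  then have five: "(r - 1) * int (card {i\<in>N. rr i = 1}) \<le> b"
    by (simp add: mult.commute)
  show ?thesis
    unfolding SA_def[symmetric] SB_def[symmetric]
  proof (intro conjI)
    show "b = k * (r - 1) + SA \<longleftrightarrow> (\<forall>i\<in>B. rr i = 1)"
      using lin(5) SB_eq by simp
    show "b = (k - 1) * (r - 1) \<longleftrightarrow> e - r = k \<and> SB = e - 1 \<and> (\<forall>i\<in>A. rr i = r)"
      using lin(7) SA_eq by simp
    show "b = (e - r - 1) * (r - 1) \<longrightarrow> P"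
      using lin(6,7) P unfolding SB_def by blast
  qed (use lin five in simp_all)
qed

section \<open>Discrete valuations\<close>

locale discrete_valuation =
  fixes v :: "'a::field \<Rightarrow> int"
  assumes normalized: "normalized_valuation v"
begin

lemma val_mult: "a \<noteq> 0 \<Longrightarrow> b \<noteq> 0 \<Longrightarrow> v (a * b) = v a + v b"
  and val_add: "a \<noteq> 0 \<Longrightarrow> b \<noteq> 0 \<Longrightarrow> a + b \<noteq> 0 \<Longrightarrow> min (v a) (v b) \<le> v (a + b)"
  and uniformizer_ex: "\<exists>t. t \<noteq> 0 \<and> v t = 1"
  using normalized unfolding normalized_valuation_def by auto

lemma val_one [simp]: "v 1 = 0"
  using val_mult[of 1 1] by simp

lemma val_inverse: "a \<noteq> 0 \<Longrightarrow> v (inverse a) = - v a"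
  using val_mult[of a "inverse a"] by simp

lemma val_divide: "a \<noteq> 0 \<Longrightarrow> b \<noteq> 0 \<Longrightarrow> v (a / b) = v a - v b"
  using val_mult[of a "inverse b"] val_inverse[of b] by (simp add: divide_inverse)

lemma val_minus [simp]: "v (- a) = v a"
proof -
  have "v (-1) = 0"
    using val_mult[of "-1" "-1"] by simp
  then show ?thesis
    using val_mult[of "-1" a] by (cases "a = 0") auto
qed

lemma val_add_eq_left:
  assumes "a \<noteq> 0" "b \<noteq> 0" "v a < v b"
  shows "a + b \<noteq> 0" "v (a + b) = v a"
proof -
  show ab: "a + b \<noteq> 0"
  proof
    assume "a + b = 0"
    then have "b = - a" by (simp add: add_eq_0_iff)
    then show False using assms(3) by simp
  qed
  have "min (v (a + b)) (v (- b)) \<le> v (a + b + - b)"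
    by (rule val_add) (use ab assms(1,2) in simp_all)
  then have "min (v (a + b)) (v b) \<le> v a"
    by simp
  then show "v (a + b) = v a"
    using val_add[OF assms(1,2) ab] assms(3) by linarith
qed

definition val_ge :: "int \<Rightarrow> 'a set" where
  "val_ge m = {z. z = 0 \<or> m \<le> v z}"

definition val_set :: "'a set \<Rightarrow> int set" where
  "val_set M = {v z | z. z \<in> M \<and> z \<noteq> 0}"

lemma val_ge_iff: "z \<in> val_ge m \<longleftrightarrow> z = 0 \<or> m \<le> v z"
  by (simp add: val_ge_def)

lemma zero_val_ge [simp]: "0 \<in> val_ge m"
  by (simp add: val_ge_def)

lemma val_ge_add: "a \<in> val_ge m \<Longrightarrow> b \<in> val_ge m \<Longrightarrow> a + b \<in> val_ge m"
  using val_add[of a b] by (cases "a = 0 \<or> b = 0 \<or> a + b = 0") (auto simp: val_ge_def)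

lemma val_ge_mult: "a \<in> val_ge m \<Longrightarrow> b \<in> val_ge n \<Longrightarrow> a * b \<in> val_ge (m + n)"
  using val_mult[of a b] by (cases "a = 0"; cases "b = 0") (auto simp: val_ge_def)

lemma val_ge_antimono: "m \<le> n \<Longrightarrow> val_ge n \<subseteq> val_ge m"
  by (auto simp: val_ge_def)

lemma val_set_iff: "u \<in> val_set M \<longleftrightarrow> (\<exists>z\<in>M. z \<noteq> 0 \<and> v z = u)"
  by (auto simp: val_set_def)

lemma val_set_mono: "M \<subseteq> N \<Longrightarrow> val_set M \<subseteq> val_set N"
  by (auto simp: val_set_def)

definition unif :: 'a where
  "unif = (SOME t. t \<noteq> 0 \<and> v t = 1)"

lemma unif_nonzero [simp]: "unif \<noteq> 0" and val_unif [simp]: "v unif = 1"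
  using someI_ex[OF uniformizer_ex] unfolding unif_def by auto

lemma val_unif_power [simp]: "v (unif ^ n) = int n"
  by (induction n) (simp_all add: val_mult)

lemma unif_power_int_nonzero [simp]: "unif powi j \<noteq> 0"
  by (simp add: power_int_not_zero)

lemma val_unif_power_int [simp]: "v (unif powi j) = j"
proof (cases "j \<ge> 0")
  case True
  then show ?thesis
    by (metis int_nat_eq power_int_of_nat val_unif_power)
next
  case False
  then have "j = - int (nat (- j))"
    by simp
  then show ?thesis
    using val_inverse[of "unif ^ nat (- j)"] by (metis power_int_minus power_int_of_nat
        power_not_zero unif_nonzero val_unif_power)
qed

lemma unif_power_int_val_ge: "unif powi j \<in> val_ge j"
  by (simp add: val_ge_def)

lemma val_set_val_ge [simp]: "u \<in> val_set (val_ge a) \<longleftrightarrow> a \<le> u"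
proof
  assume "a \<le> u"
  then have "unif powi u \<in> val_ge a"
    by (simp add: val_ge_iff)
  then show "u \<in> val_set (val_ge a)"
    unfolding val_set_iff by (intro bexI[of _ "unif powi u"]) (simp_all add: unif_power_int_nonzero unif_nonzero)
qed (auto simp: val_set_iff val_ge_def)

lemma val_set_lower_bound: "M \<subseteq> val_ge b \<Longrightarrow> u \<in> val_set M \<Longrightarrow> b \<le> u"
  using val_set_mono[of M "val_ge b"] by auto

lemma new_values_bounded:
  assumes "val_ge a \<subseteq> N" "M \<subseteq> val_ge b"
  shows "val_set M - val_set N \<subseteq> {b..<a}"
proof
  fix u assume u: "u \<in> val_set M - val_set N"
  have "b \<le> u"
    using u val_set_lower_bound[OF assms(2)] by blast
  moreover have "\<not> a \<le> u"
    using u val_set_mono[OF assms(1)] by auto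
  ultimately show "u \<in> {b..<a}"
    by simp
qed

lemma finite_new_values:
  "val_ge a \<subseteq> N \<Longrightarrow> M \<subseteq> val_ge b \<Longrightarrow> finite (val_set M - val_set N)"
  by (rule finite_subset[OF new_values_bounded]) simp_all

lemma val_set_plus_val_ge:
  assumes "M \<subseteq> val_ge g"
  shows "val_set (N + M) \<subseteq> val_set N \<union> {g..}"
proof
  fix u assume "u \<in> val_set (N + M)"
  then obtain z where z: "z \<in> N + M" "z \<noteq> 0" "v z = u"
    unfolding val_set_iff by blast
  from z(1) obtain x y where xy: "z = x + y" "x \<in> N" "y \<in> M"
    by (rule set_plus_elim)
  have vy: "y = 0 \<or> g \<le> v y"
    using xy(3) assms by (auto simp: val_ge_def)
  consider "y = 0" | "x = 0" | "x \<noteq> 0" "y \<noteq> 0" "v x < v y" | "x \<noteq> 0" "y \<noteq> 0" "v y \<le> v x"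
    by linarith
  then show "u \<in> val_set N \<union> {g..}"
  proof cases
    case 1
    then show ?thesis using xy z by (auto simp: val_set_iff)
  next
    case 2
    then show ?thesis using xy z vy by auto
  next
    case 3
    then have "v z = v x"
      using val_add_eq_left(2)[of x y] xy(1) by simp
    then show ?thesis using xy z 3 by (auto simp: val_set_iff)
  next
    case 4
    then have "v y \<le> v z"
      using val_add[of x y] xy(1) z(2) by simp
    then show ?thesis using z vy 4 by simp
  qed
qed

lemma val_set_scale:
  assumes "y \<noteq> 0"
  shows "val_set (y *o M) = (\<lambda>u. v y + u) ` val_set M"
proof
  show "val_set (y *o M) \<subseteq> (\<lambda>u. v y + u) ` val_set M"
  proof
    fix u assume "u \<in> val_set (y *o M)"
    then obtain z where z: "z \<in> M" "y * z \<noteq> 0" "v (y * z) = u"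
      by (auto simp: val_set_iff elt_set_times_def)
    then have "v z \<in> val_set M" "u = v y + v z"
      using assms by (auto simp: val_set_iff val_mult)
    then show "u \<in> (\<lambda>u. v y + u) ` val_set M"
      by blast
  qed
  show "(\<lambda>u. v y + u) ` val_set M \<subseteq> val_set (y *o M)"
  proof
    fix u assume "u \<in> (\<lambda>u. v y + u) ` val_set M"
    then obtain z where z: "z \<in> M" "z \<noteq> 0" "u = v y + v z"
      by (auto simp: val_set_iff)
    then have "y * z \<in> y *o M" "y * z \<noteq> 0" "v (y * z) = u"
      using assms by (auto simp: val_mult)
    then show "u \<in> val_set (y *o M)"
      unfolding val_set_iff by blast
  qed
qed

end

section \<open>Lengths of modules squeezed between valuation ideals\<close>

locale residually_rational_order = discrete_valuation v
  for v :: "'a::field \<Rightarrow> int" +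
  fixes R :: "'a set"
  assumes subring: "subring R"
    and R_val_ge_0: "R \<subseteq> val_ge 0"
    and residually_rational: "\<And>u. u \<in> val_ge 0 \<Longrightarrow> \<exists>a\<in>R. u - a \<in> val_ge 1"
begin

lemma zero_in_R: "0 \<in> R" and one_in_R: "1 \<in> R"
  and R_add: "a \<in> R \<Longrightarrow> b \<in> R \<Longrightarrow> a + b \<in> R"
  and R_mult: "a \<in> R \<Longrightarrow> b \<in> R \<Longrightarrow> a * b \<in> R"
  and R_minus: "a \<in> R \<Longrightarrow> - a \<in> R"
  using subring unfolding subring_def by auto

lemma R_diff: "a \<in> R \<Longrightarrow> b \<in> R \<Longrightarrow> a - b \<in> R"
  using R_add[of a "- b"] R_minus[of b] by simp

lemma Rsubmod_zero: "Rsubmod R M \<Longrightarrow> 0 \<in> M"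
  and Rsubmod_add: "Rsubmod R M \<Longrightarrow> a \<in> M \<Longrightarrow> b \<in> M \<Longrightarrow> a + b \<in> M"
  and Rsubmod_mult: "Rsubmod R M \<Longrightarrow> a \<in> R \<Longrightarrow> b \<in> M \<Longrightarrow> a * b \<in> M"
  unfolding Rsubmod_def by auto

lemma Rsubmod_diff: "Rsubmod R M \<Longrightarrow> a \<in> M \<Longrightarrow> b \<in> M \<Longrightarrow> a - b \<in> M"
  using Rsubmod_add[of M a "- b"] Rsubmod_mult[of M "- 1" b] R_minus[OF one_in_R] by simp

lemma Rsubmod_R: "Rsubmod R R"
  unfolding Rsubmod_def using zero_in_R R_add R_mult by blast

lemma Rsubmod_val_ge: "Rsubmod R (val_ge m)"
  unfolding Rsubmod_def using R_val_ge_0 val_ge_add val_ge_mult[of _ 0 _ m] by auto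

lemma Rsubmod_Int: "Rsubmod R A \<Longrightarrow> Rsubmod R B \<Longrightarrow> Rsubmod R (A \<inter> B)"
  unfolding Rsubmod_def by blast

lemma Rsubmod_plus:
  assumes A: "Rsubmod R A" and B: "Rsubmod R B"
  shows "Rsubmod R (A + B)"
  unfolding Rsubmod_def
proof (intro conjI ballI)
  show "0 \<in> A + B"
    using set_plus_intro[OF Rsubmod_zero[OF A] Rsubmod_zero[OF B]] by simp
next
  fix z w assume "z \<in> A + B" "w \<in> A + B"
  then obtain x y x' y' where "z = x + y" "x \<in> A" "y \<in> B" "w = x' + y'" "x' \<in> A" "y' \<in> B"
    by (auto elim!: set_plus_elim)
  then show "z + w \<in> A + B"
    using set_plus_intro[OF Rsubmod_add[OF A, of x x'] Rsubmod_add[OF B, of y y']]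
    by (simp add: algebra_simps)
next
  fix l z assume l: "l \<in> R" and "z \<in> A + B"
  then obtain x y where xy: "z = x + y" "x \<in> A" "y \<in> B"
    by (auto elim!: set_plus_elim)
  have "l * x + l * y \<in> A + B"
    using set_plus_intro[OF Rsubmod_mult[OF A l xy(2)] Rsubmod_mult[OF B l xy(3)]] .
  then show "l * z \<in> A + B"
    using xy(1) by (simp add: distrib_left)
qed

lemma Rsubmod_scale:
  assumes M: "Rsubmod R M"
  shows "Rsubmod R (y *o M)"
  unfolding Rsubmod_def
proof (intro conjI ballI)
  show "0 \<in> y *o M"
    using set_times_intro2[OF Rsubmod_zero[OF M], of y] by simp
next
  fix a b assume "a \<in> y *o M" "b \<in> y *o M"
  then obtain a' b' where ab: "a = y * a'" "b = y * b'" "a' \<in> M" "b' \<in> M"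
    by (auto simp: elt_set_times_def)
  then show "a + b \<in> y *o M"
    using set_times_intro2[OF Rsubmod_add[OF M ab(3,4)], of y] by (simp add: distrib_left)
next
  fix l b assume l: "l \<in> R" and "b \<in> y *o M"
  then obtain b' where b: "b = y * b'" "b' \<in> M"
    by (auto simp: elt_set_times_def)
  then show "l * b \<in> y *o M"
    using set_times_intro2[OF Rsubmod_mult[OF M l b(2)], of y] by (simp add: mult.left_commute)
qed

lemma subset_plus_left: "0 \<in> B \<Longrightarrow> A \<subseteq> A + (B :: 'a set)"
  using set_zero_plus2[of B A] by (simp add: add.commute)

lemma plus_subset: "Rsubmod R M \<Longrightarrow> A \<subseteq> M \<Longrightarrow> B \<subseteq> M \<Longrightarrow> A + B \<subseteq> M"
  by (auto elim!: set_plus_elim intro: Rsubmod_add)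

lemma approximate_by_R_multiple:
  assumes "y \<noteq> 0" "z \<noteq> 0" "v y = v z"
  obtains l where "l \<in> R" "z - l * y \<in> val_ge (v z + 1)"
proof -
  have "z / y \<in> val_ge 0"
    using assms by (simp add: val_ge_iff val_divide)
  then obtain l where l: "l \<in> R" "z / y - l \<in> val_ge 1"
    using residually_rational by blast
  have "y * (z / y - l) \<in> val_ge (v y + 1)"
    using val_ge_mult[OF _ l(2), of y "v y"] by (simp add: val_ge_iff)
  moreover have "y * (z / y - l) = z - l * y"
    using assms(1) by (simp add: field_simps)
  ultimately show ?thesis
    using that l(1) assms(3) by simp
qed

lemma Rsubmod_eq_of_val_set:
  assumes L: "Rsubmod R L" and L': "Rsubmod R L'" and "L \<subseteq> L'" and "val_ge a \<subseteq> L"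
    and vals: "val_set L' \<subseteq> val_set L"
  shows "L' = L"
proof -
  have "\<forall>z\<in>L'. nat (a - v z) = d \<longrightarrow> z \<in> L" for d
  proof (induction d rule: less_induct)
    case (less d)
    show ?case
    proof (intro ballI impI)
      fix z assume z: "z \<in> L'" "nat (a - v z) = d"
      show "z \<in> L"
      proof (cases "z \<in> val_ge a")
        case True
        then show ?thesis using \<open>val_ge a \<subseteq> L\<close> by blast
      next
        case False
        then have z0: "z \<noteq> 0" and za: "v z < a"
          by (auto simp: val_ge_iff)
        then have "v z \<in> val_set L'"
          using z(1) by (auto simp: val_set_iff)
        then have "v z \<in> val_set L"
          using vals by blast
        then obtain y where y: "y \<in> L" "y \<noteq> 0" "v y = v z"
          by (auto simp: val_set_iff)
        obtain l where l: "l \<in> R" "z - l * y \<in> val_ge (v z + 1)"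
          using approximate_by_R_multiple[OF y(2) z0 y(3)] .
        have ly: "l * y \<in> L"
          using Rsubmod_mult[OF L l(1) y(1)] .
        have "z - l * y \<in> L"
        proof (cases "z - l * y = 0")
          case False
          then have "nat (a - v (z - l * y)) < d"
            using l(2) z(2) za by (auto simp: val_ge_iff)
          moreover have "z - l * y \<in> L'"
            using Rsubmod_diff[OF L' z(1)] ly \<open>L \<subseteq> L'\<close> by blast
          ultimately show ?thesis
            using less.IH by blast
        qed (simp add: Rsubmod_zero[OF L])
        then show "z \<in> L"
          using Rsubmod_add[OF L _ ly] by force
      qed
    qed
  qed
  then show ?thesis
    using \<open>L \<subseteq> L'\<close> by blast
qed

definition Rchain :: "(nat \<Rightarrow> 'a set) \<Rightarrow> 'a set \<Rightarrow> 'a set \<Rightarrow> nat \<Rightarrow> bool" where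
  "Rchain L N M n \<longleftrightarrow>
     L 0 = N \<and> L n = M \<and> (\<forall>i\<le>n. Rsubmod R (L i)) \<and> (\<forall>i<n. L i \<subset> L (Suc i))"

lemma len_eq_Sup_Rchain: "len R N M = Sup {n. \<exists>L. Rchain L N M n}"
  unfolding len_def Rchain_def by simp

lemma Rchain_mono:
  assumes C: "Rchain L N M n" and "i \<le> j" "j \<le> n"
  shows "L i \<subseteq> L j"
  using assms(2,3)
proof (induction j)
  case (Suc j)
  show ?case
  proof (cases "i = Suc j")
    case False
    then have "L i \<subseteq> L j"
      using Suc by simp
    moreover have "L j \<subset> L (Suc j)"
      using C Suc.prems by (simp add: Rchain_def)
    ultimately show ?thesis by blast
  qed simp
qed simp

lemma Rchain_bounds:
  assumes "Rchain L N M n" "i \<le> n"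
  shows "N \<subseteq> L i" "L i \<subseteq> M"
  using Rchain_mono[OF assms(1), of 0 i] Rchain_mono[OF assms(1), of i n] assms
  by (auto simp: Rchain_def)

definition sandwiched :: "'a set \<Rightarrow> 'a set \<Rightarrow> int \<Rightarrow> int \<Rightarrow> bool" where
  "sandwiched N M a b \<longleftrightarrow>
     Rsubmod R N \<and> Rsubmod R M \<and> N \<subseteq> M \<and> val_ge a \<subseteq> N \<and> M \<subseteq> val_ge b"

lemma Rchain_length_le:
  assumes F: "sandwiched N M a b" and C: "Rchain L N M n"
  shows "n \<le> card (val_set M - val_set N)"
proof -
  have fin: "finite (val_set M - val_set N)"
    using F finite_new_values by (auto simp: sandwiched_def)
  have "i \<le> card (val_set (L i) - val_set N)" if "i \<le> n" for i
    using that
  proof (induction i)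
    case (Suc i)
    have strict: "L i \<subset> L (Suc i)" and sub: "Rsubmod R (L i)" "Rsubmod R (L (Suc i))"
      using C Suc.prems by (auto simp: Rchain_def)
    have "val_ge a \<subseteq> L i"
      using F Rchain_bounds(1)[OF C, of i] Suc.prems by (auto simp: sandwiched_def)
    then have "val_set (L (Suc i)) \<noteq> val_set (L i)"
      using Rsubmod_eq_of_val_set[OF sub] strict by blast
    moreover have "val_set N \<subseteq> val_set (L i)" "val_set (L i) \<subseteq> val_set (L (Suc i))"
      using val_set_mono Rchain_bounds(1)[OF C, of i] strict Suc.prems by auto
    ultimately have "val_set (L i) - val_set N \<subset> val_set (L (Suc i)) - val_set N"
      by blast
    moreover have "val_set (L (Suc i)) - val_set N \<subseteq> val_set M - val_set N"
      using val_set_mono[OF Rchain_bounds(2)[OF C Suc.prems]] by blast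
    ultimately have "card (val_set (L i) - val_set N) < card (val_set (L (Suc i)) - val_set N)"
      using fin by (meson finite_subset psubset_card_mono)
    then show ?case
      using Suc by simp
  qed simp
  from this[of n] show ?thesis
    using C by (simp add: Rchain_def)
qed

text \<open>Adjoining the elements of \<open>M\<close> of the largest missing value removes exactly that value.\<close>
lemma sandwiched_step:
  assumes F: "sandwiched N M a b" and ne: "val_set M - val_set N \<noteq> {}"
  defines "g \<equiv> Max (val_set M - val_set N)"
  obtains N' where "sandwiched N' M a b" "N \<subset> N'"
    "val_set M - val_set N' = (val_set M - val_set N) - {g}"
proof -
  have N: "Rsubmod R N" and M: "Rsubmod R M" and "N \<subseteq> M" "val_ge a \<subseteq> N" "M \<subseteq> val_ge b"
    using F by (auto simp: sandwiched_def)
  have fin: "finite (val_set M - val_set N)"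
    using finite_new_values \<open>val_ge a \<subseteq> N\<close> \<open>M \<subseteq> val_ge b\<close> by blast
  have g: "g \<in> val_set M - val_set N" "\<And>u. u \<in> val_set M - val_set N \<Longrightarrow> u \<le> g"
    using Max_in[OF fin ne] Max_ge[OF fin] unfolding g_def by auto
  define N' where "N' = N + (M \<inter> val_ge g)"
  have N': "Rsubmod R N'"
    unfolding N'_def using Rsubmod_plus[OF N Rsubmod_Int[OF M Rsubmod_val_ge]] .
  have NN': "N \<subseteq> N'"
    unfolding N'_def by (rule subset_plus_left) (simp add: Rsubmod_zero[OF M])
  have N'M: "N' \<subseteq> M"
    unfolding N'_def using plus_subset[OF M] \<open>N \<subseteq> M\<close> by blast
  have "g \<in> val_set (M \<inter> val_ge g)"
    using g(1) by (auto simp: val_set_iff val_ge_iff)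
  then have gN': "g \<in> val_set N'"
    using val_set_mono[OF set_zero_plus2[OF Rsubmod_zero[OF N]]] unfolding N'_def by blast
  have N'_vals: "val_set N' \<subseteq> val_set N \<union> {g..}"
    unfolding N'_def by (rule val_set_plus_val_ge) blast
  have "val_set M - val_set N' = (val_set M - val_set N) - {g}"
  proof
    show "val_set M - val_set N' \<subseteq> (val_set M - val_set N) - {g}"
      using gN' val_set_mono[OF NN'] by blast
    show "(val_set M - val_set N) - {g} \<subseteq> val_set M - val_set N'"
    proof
      fix u assume u: "u \<in> (val_set M - val_set N) - {g}"
      then have "u < g"
        using g(2)[of u] by force
      then show "u \<in> val_set M - val_set N'"
        using u N'_vals by auto
    qed
  qed
  moreover have "sandwiched N' M a b"
    using N' M N'M NN' \<open>val_ge a \<subseteq> N\<close> \<open>M \<subseteq> val_ge b\<close> by (auto simp: sandwiched_def)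
  moreover have "N \<subset> N'"
    using NN' gN' g(1) by blast
  ultimately show ?thesis
    using that by blast
qed

lemma Rchain_ex:
  "sandwiched N M a b \<Longrightarrow> \<exists>L. Rchain L N M (card (val_set M - val_set N))"
proof (induction "card (val_set M - val_set N)" arbitrary: N)
  case 0
  then have "finite (val_set M - val_set N)"
    using finite_new_values by (auto simp: sandwiched_def)
  then have "val_set M \<subseteq> val_set N"
    using 0 by simp
  then have "M = N"
    using Rsubmod_eq_of_val_set 0 by (auto simp: sandwiched_def)
  then have "Rchain (\<lambda>_. N) N M 0"
    using 0 by (simp add: Rchain_def sandwiched_def)
  then show ?case
    using 0 by metis
next
  case (Suc p N)
  then have ne: "val_set M - val_set N \<noteq> {}"
    by (metis card.empty nat.simps(3))
  then obtain N' where N': "sandwiched N' M a b" "N \<subset> N'"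
    and diff: "val_set M - val_set N' = (val_set M - val_set N) - {Max (val_set M - val_set N)}"
    using sandwiched_step[OF Suc.prems] by blast
  have "finite (val_set M - val_set N)"
    using Suc.prems finite_new_values by (auto simp: sandwiched_def)
  then have "p = card (val_set M - val_set N')"
    unfolding diff using Suc.hyps(2) Max_in[OF _ ne] by (simp add: card_Diff_singleton)
  then obtain L where L: "Rchain L N' M p"
    using Suc.hyps(1) N'(1) by metis
  have "Rchain (\<lambda>i. if i = 0 then N else L (i - 1)) N M (Suc p)"
    unfolding Rchain_def
  proof (intro conjI allI impI)
    show "(if Suc p = 0 then N else L (Suc p - 1)) = M"
      using L by (simp add: Rchain_def)
  next
    fix i assume "i \<le> Suc p"
    then show "Rsubmod R (if i = 0 then N else L (i - 1))"
      using L Suc.prems by (auto simp: Rchain_def sandwiched_def)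
  next
    fix i assume "i < Suc p"
    then show "(if i = 0 then N else L (i - 1)) \<subset> (if Suc i = 0 then N else L (Suc i - 1))"
      using L N'(2) by (cases i) (auto simp: Rchain_def)
  qed simp
  then show ?case
    using Suc.hyps(2) by metis
qed

lemma len_eq_card_new_values:
  assumes "sandwiched N M a b"
  shows "len R N M = card (val_set M - val_set N)"
  unfolding len_eq_Sup_Rchain
proof (rule cSup_eq_maximum)
  show "card (val_set M - val_set N) \<in> {n. \<exists>L. Rchain L N M n}"
    using Rchain_ex[OF assms] by blast
qed (use Rchain_length_le[OF assms] in blast)

lemma eq_of_plus_eq:
  assumes P: "Rsubmod R P" and A: "Rsubmod R A" and S: "0 \<in> S"
    and "A \<subseteq> B" "B \<subseteq> P" "P \<inter> S \<subseteq> A" and eq: "A + S = B + S"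
  shows "A = B"
proof -
  have "z \<in> A" if z: "z \<in> B" for z
  proof -
    have "z \<in> A + S"
      using eq subset_plus_left[OF S] z by blast
    then obtain a q where aq: "z = a + q" "a \<in> A" "q \<in> S"
      by (rule set_plus_elim)
    then have "q \<in> P"
      using Rsubmod_diff[OF P, of z a] z \<open>A \<subseteq> B\<close> \<open>B \<subseteq> P\<close> by force
    then show "z \<in> A"
      using aq \<open>P \<inter> S \<subseteq> A\<close> Rsubmod_add[OF A] by blast
  qed
  then show ?thesis
    using \<open>A \<subseteq> B\<close> by blast
qed

text \<open>The length of \<open>P/P0\<close> is at most that of \<open>(P + S)/S\<close>, because \<open>P \<inter> S \<subseteq> P0 \<subseteq> S\<close>:
  a composition series of \<open>P/P0\<close> maps to a strict chain from \<open>S\<close> to \<open>P + S\<close>.\<close>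
lemma card_new_values_le_plus:
  assumes F: "sandwiched P0 P a b" and FS: "sandwiched S (P + S) a' b'"
    and "P0 \<subseteq> S" "P \<inter> S \<subseteq> P0"
  shows "card (val_set P - val_set P0) \<le> card (val_set (P + S) - val_set S)"
proof -
  define p where "p = card (val_set P - val_set P0)"
  obtain L where L: "Rchain L P0 P p"
    using Rchain_ex[OF F] unfolding p_def by blast
  have S: "Rsubmod R S" and P: "Rsubmod R P"
    using F FS by (auto simp: sandwiched_def)
  have "Rchain (\<lambda>k. L k + S) S (P + S) p"
    unfolding Rchain_def
  proof (intro conjI allI impI)
    have "0 \<in> L 0" "L 0 \<subseteq> S"
      using L F \<open>P0 \<subseteq> S\<close> Rsubmod_zero by (auto simp: Rchain_def sandwiched_def)
    then show "L 0 + S = S"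
      using plus_subset[OF S] set_zero_plus2[of "L 0" S] by blast
    show "L p + S = P + S"
      using L by (simp add: Rchain_def)
  next
    fix k assume "k \<le> p"
    then show "Rsubmod R (L k + S)"
      using L Rsubmod_plus[OF _ S] by (simp add: Rchain_def)
  next
    fix k assume k: "k < p"
    have strict: "L k \<subset> L (Suc k)" and Lk: "Rsubmod R (L k)"
      using L k by (auto simp: Rchain_def)
    have "L k + S \<noteq> L (Suc k) + S"
    proof
      assume "L k + S = L (Suc k) + S"
      moreover have "P \<inter> S \<subseteq> L k"
        using Rchain_bounds(1)[OF L, of k] k \<open>P \<inter> S \<subseteq> P0\<close> by auto
      ultimately have "L k = L (Suc k)"
        using eq_of_plus_eq[OF P Lk Rsubmod_zero[OF S]] strict Rchain_bounds(2)[OF L, of "Suc k"] k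
        by auto
      then show False
        using strict by simp
    qed
    moreover have "L k + S \<subseteq> L (Suc k) + S"
      using strict by (intro set_plus_mono2) auto
    ultimately show "L k + S \<subset> L (Suc k) + S"
      by blast
  qed
  then show ?thesis
    unfolding p_def using Rchain_length_le[OF FS] by blast
qed

lemma card_new_values_le_of_embedding:
  assumes F: "sandwiched P0 P a b" and FQ: "sandwiched S Q a' b'"
    and "P \<subseteq> Q" "P0 \<subseteq> S" "P \<inter> S \<subseteq> P0"
  shows "card (val_set P - val_set P0) \<le> card (val_set Q - val_set S)"
proof -
  have S: "Rsubmod R S" and Q: "Rsubmod R Q" and "S \<subseteq> Q"
    using FQ by (auto simp: sandwiched_def)
  have PSQ: "P + S \<subseteq> Q"
    using plus_subset[OF Q \<open>P \<subseteq> Q\<close> \<open>S \<subseteq> Q\<close>] .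
  have "sandwiched S (P + S) a' b'"
    unfolding sandwiched_def
  proof (intro conjI)
    show "Rsubmod R (P + S)"
      using F Rsubmod_plus[OF _ S] by (simp add: sandwiched_def)
    show "S \<subseteq> P + S"
      using F Rsubmod_zero set_zero_plus2[of P S] by (simp add: sandwiched_def)
    show "P + S \<subseteq> val_ge b'"
      using PSQ FQ by (auto simp: sandwiched_def)
  qed (use FQ in \<open>simp_all add: sandwiched_def\<close>)
  then have "card (val_set P - val_set P0) \<le> card (val_set (P + S) - val_set S)"
    using card_new_values_le_plus[OF F _ \<open>P0 \<subseteq> S\<close> \<open>P \<inter> S \<subseteq> P0\<close>] by blast
  also have "\<dots> \<le> card (val_set Q - val_set S)"
  proof (rule card_mono)
    show "finite (val_set Q - val_set S)"
      using FQ finite_new_values by (auto simp: sandwiched_def)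
    show "val_set (P + S) - val_set S \<subseteq> val_set Q - val_set S"
      using val_set_mono[OF PSQ] by blast
  qed
  finally show ?thesis .
qed

end

section \<open>The value semigroup of \<open>R\<close>\<close>

locale analytically_irreducible =
  fixes R :: "'a::field set" and v :: "'a \<Rightarrow> int"
  assumes setting: "setting R v"
begin

lemma setting_conditions:
  "subring R" "quot_field R" "local_ring R" "\<not> regular_dim1 R" "normalized_valuation v"
  "integral_closure R = valuation_ring v" "\<exists>F. finite F \<and> integral_closure R = Rspan R F"
  "\<forall>u\<in>integral_closure R. \<exists>a\<in>R. u - a \<in> valuation_max_ideal v"
  using setting unfolding setting_def by auto

sublocale discrete_valuation v
  by unfold_locales (rule setting_conditions)

lemma integral_closure_eq: "integral_closure R = val_ge 0"
  using setting_conditions(6) by (simp add: valuation_ring_def val_ge_def)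

lemma R_subset_integral_closure: "R \<subseteq> integral_closure R"
proof
  fix z assume "z \<in> R"
  then have "(\<forall>i<1. (\<lambda>_. - z) i \<in> R) \<and> z ^ 1 + (\<Sum>i<1. (\<lambda>_. - z) i * z ^ i) = 0"
    using setting_conditions(1) by (simp add: subring_def)
  then show "z \<in> integral_closure R"
    unfolding integral_closure_def mem_Collect_eq by (intro exI)
qed

sublocale residually_rational_order v R
proof
  show "subring R" "R \<subseteq> val_ge 0"
    using setting_conditions(1) R_subset_integral_closure integral_closure_eq by auto
  fix u assume "u \<in> val_ge 0"
  then obtain a where "a \<in> R" "u - a \<in> valuation_max_ideal v"
    using setting_conditions(8) integral_closure_eq by auto
  then show "\<exists>a\<in>R. u - a \<in> val_ge 1"
    by (intro bexI[of _ a]) (auto simp: valuation_max_ideal_def val_ge_iff)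
qed

lemma R_sum: "finite F \<Longrightarrow> (\<And>f. f \<in> F \<Longrightarrow> g f \<in> R) \<Longrightarrow> sum g F \<in> R"
  by (induction F rule: finite_induct) (simp_all add: zero_in_R R_add)

lemma R_prod: "finite F \<Longrightarrow> (\<And>f. f \<in> F \<Longrightarrow> g f \<in> R) \<Longrightarrow> prod g F \<in> R"
  by (induction F rule: finite_induct) (simp_all add: one_in_R R_mult)

text \<open>Clearing the denominators of a finite generating set of \<open>val_ge 0\<close> gives a nonzero
  \<open>d \<in> R\<close> with \<open>d * val_ge 0 \<subseteq> R\<close>.\<close>
lemma val_ge_subset_R_ex: "\<exists>D. val_ge D \<subseteq> R"
proof -
  have "\<forall>z. \<exists>b. b \<in> R \<and> b \<noteq> 0 \<and> b * z \<in> R"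
  proof
    fix z
    from setting_conditions(2) have "\<exists>a\<in>R. \<exists>b\<in>R. b \<noteq> 0 \<and> z = a / b"
      unfolding quot_field_def by (rule spec)
    then obtain a b where "a \<in> R" "b \<in> R" "b \<noteq> 0" "z = a / b"
      by auto
    then show "\<exists>b. b \<in> R \<and> b \<noteq> 0 \<and> b * z \<in> R"
      by (intro exI[of _ b]) simp
  qed
  from choice[OF this] obtain B where "\<forall>z. B z \<in> R \<and> B z \<noteq> 0 \<and> B z * z \<in> R" ..
  then have B: "\<And>z. B z \<in> R" "\<And>z. B z \<noteq> 0" "\<And>z. B z * z \<in> R"
    by simp_all
  obtain F where F: "finite F" "val_ge 0 = Rspan R F"
    using setting_conditions(7) integral_closure_eq by auto
  define d where "d = prod B F"
  have d: "d \<noteq> 0"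
    unfolding d_def using F(1) B(2) by (simp add: prod_zero_iff)
  have df: "d * f \<in> R" if "f \<in> F" for f
  proof -
    have eq: "d * f = (B f * f) * prod B (F - {f})"
      unfolding d_def prod.remove[OF F(1) that, of B] by (simp only: ac_simps)
    have "prod B (F - {f}) \<in> R"
      using F(1) B(1) by (intro R_prod) auto
    then have "(B f * f) * prod B (F - {f}) \<in> R"
      using R_mult[OF B(3)] by blast
    then show ?thesis
      unfolding eq .
  qed
  have dw: "d * w \<in> R" if "w \<in> val_ge 0" for w
  proof -
    have "w \<in> Rspan R F"
      using that F(2) by simp
    then obtain c where c: "w = (\<Sum>f\<in>F. c f * f)" "\<forall>f\<in>F. c f \<in> R"
      unfolding Rspan_def by blast
    have "d * w = (\<Sum>f\<in>F. c f * (d * f))"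
      unfolding c(1) sum_distrib_left by (simp add: algebra_simps)
    then show ?thesis
      using R_sum[OF F(1)] c(2) df R_mult by simp
  qed
  have "val_ge (v d) \<subseteq> R"
  proof
    fix z assume "z \<in> val_ge (v d)"
    then have "z / d \<in> val_ge 0"
      using d by (cases "z = 0") (simp_all add: val_ge_iff val_divide)
    then show "z \<in> R"
      using dw[of "z / d"] d by simp
  qed
  then show ?thesis
    by blast
qed

abbreviation V :: "nat set" where
  "V \<equiv> vR R v"

lemma mem_vR_iff: "n \<in> V \<longleftrightarrow> int n \<in> val_set R"
proof
  assume "n \<in> V"
  then obtain a where a: "a \<in> R" "a \<noteq> 0" "n = nat (v a)"
    unfolding vR_def by blast
  have "a \<in> val_ge 0"
    using a(1) R_val_ge_0 by blast
  then have "v a = int n"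
    using a(2,3) by (simp add: val_ge_iff)
  then show "int n \<in> val_set R"
    unfolding val_set_iff using a(1,2) by blast
next
  assume "int n \<in> val_set R"
  then obtain a where "a \<in> R" "a \<noteq> 0" "v a = int n"
    unfolding val_set_iff by blast
  then show "n \<in> V"
    unfolding vR_def by (intro image_eqI[of _ _ a]) auto
qed

lemma nat_mem_vR:
  assumes "u \<in> val_set R"
  shows "nat u \<in> V"
proof -
  have "0 \<le> u"
    using val_set_lower_bound[OF R_val_ge_0 assms] .
  then show ?thesis
    using assms by (simp add: mem_vR_iff)
qed

lemma vR_add:
  assumes "n \<in> V" "m \<in> V"
  shows "n + m \<in> V"
proof -
  obtain a b where ab: "a \<in> R" "a \<noteq> 0" "v a = int n" "b \<in> R" "b \<noteq> 0" "v b = int m"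
    using assms unfolding mem_vR_iff val_set_iff by blast
  then have "a * b \<in> R" "a * b \<noteq> 0" "v (a * b) = int (n + m)"
    using R_mult[OF ab(1,4)] val_mult[OF ab(2,5)] by simp_all
  then show ?thesis
    unfolding mem_vR_iff val_set_iff by blast
qed

lemma zero_in_vR: "0 \<in> V"
  unfolding mem_vR_iff val_set_iff using one_in_R by (intro bexI[of _ 1]) auto

lemma cond_in_vR: "cond R v \<in> V"
  and cond_add_in_vR: "cond R v + j \<in> V"
  and cond_least: "c' \<in> V \<Longrightarrow> \<forall>j. c' + j \<in> V \<Longrightarrow> cond R v \<le> c'"
proof -
  obtain D where D: "val_ge D \<subseteq> R"
    using val_ge_subset_R_ex by blast
  have "nat D + j \<in> V" for j
  proof -
    have "unif powi int (nat D + j) \<in> val_ge D"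
      by (simp add: val_ge_iff)
    then have "unif powi int (nat D + j) \<in> R"
      using D by blast
    then show ?thesis
      unfolding mem_vR_iff val_set_iff
      by (intro bexI[of _ "unif powi int (nat D + j)"]) (simp_all add: unif_power_int_nonzero unif_nonzero)
  qed
  then have "nat D \<in> V \<and> (\<forall>j. nat D + j \<in> V)"
    by (metis add_0_right)
  then have "cond R v \<in> V \<and> (\<forall>j. cond R v + j \<in> V)"
    unfolding cond_def by (rule LeastI)
  then show "cond R v \<in> V" "cond R v + j \<in> V"
    by auto
  show "c' \<in> V \<Longrightarrow> \<forall>j. c' + j \<in> V \<Longrightarrow> cond R v \<le> c'"
    unfolding cond_def by (rule Least_le) simp
qed

lemma val_ge_cond_subset_R: "val_ge (int (cond R v)) \<subseteq> R"
proof -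
  obtain D where D: "val_ge D \<subseteq> R"
    using val_ge_subset_R_ex by blast
  define L where "L = R \<inter> val_ge (int (cond R v))"
  have vals: "val_set (val_ge (int (cond R v))) \<subseteq> val_set L"
  proof
    fix u assume "u \<in> val_set (val_ge (int (cond R v)))"
    then have u: "int (cond R v) \<le> u"
      by simp
    then have "cond R v + (nat u - cond R v) = nat u"
      by linarith
    then have "nat u \<in> V"
      using cond_add_in_vR[of "nat u - cond R v"] by simp
    then have "int (nat u) \<in> val_set R"
      using mem_vR_iff by blast
    then have "u \<in> val_set R"
      using u by simp
    then obtain z where z: "z \<in> R" "z \<noteq> 0" "v z = u"
      unfolding val_set_iff by blast
    then have "z \<in> L"
      using u by (simp add: L_def val_ge_iff)
    then show "u \<in> val_set L"
      using z unfolding val_set_iff by blast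
  qed
  have "val_ge (max D (int (cond R v))) \<subseteq> val_ge D"
    "val_ge (max D (int (cond R v))) \<subseteq> val_ge (int (cond R v))"
    by (simp_all add: val_ge_antimono)
  then have low: "val_ge (max D (int (cond R v))) \<subseteq> L"
    using D unfolding L_def by blast
  have "Rsubmod R L"
    unfolding L_def by (rule Rsubmod_Int[OF Rsubmod_R Rsubmod_val_ge])
  moreover have "L \<subseteq> val_ge (int (cond R v))"
    unfolding L_def by blast
  ultimately have "val_ge (int (cond R v)) = L"
    by (rule Rsubmod_eq_of_val_set[OF _ Rsubmod_val_ge _ low vals])
  moreover have "L \<subseteq> R"
    unfolding L_def by blast
  ultimately show ?thesis
    by (rule ord_eq_le_trans)
qed

lemma conductor_eq: "conductor R = val_ge (int (cond R v))"
proof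
  show "val_ge (int (cond R v)) \<subseteq> conductor R"
  proof
    fix z assume z: "z \<in> val_ge (int (cond R v))"
    have "z * y \<in> R" if "y \<in> val_ge 0" for y
      using val_ge_mult[OF z that] val_ge_cond_subset_R by auto
    then show "z \<in> conductor R"
      unfolding conductor_def colon_def integral_closure_eq by blast
  qed
  show "conductor R \<subseteq> val_ge (int (cond R v))"
  proof
    fix z assume "z \<in> conductor R"
    then have zc: "\<And>y. y \<in> val_ge 0 \<Longrightarrow> z * y \<in> R"
      unfolding conductor_def colon_def integral_closure_eq by blast
    show "z \<in> val_ge (int (cond R v))"
    proof (cases "z = 0")
      case False
      have "z \<in> R"
        using zc[of 1] by (simp add: val_ge_iff)
      then have vz: "0 \<le> v z"
        using R_val_ge_0 False by (auto simp: val_ge_iff)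
      have "nat (v z) + j \<in> V" for j
      proof -
        have "unif powi (v z + int j) / z \<in> val_ge 0"
          using val_divide[OF unif_power_int_nonzero False] by (simp add: val_ge_iff)
        then have "z * (unif powi (v z + int j) / z) \<in> R"
          by (rule zc)
        then have "unif powi (v z + int j) \<in> R"
          using False by simp
        then have "v z + int j \<in> val_set R"
          unfolding val_set_iff
          by (intro bexI[of _ "unif powi (v z + int j)"]) (simp_all add: unif_power_int_nonzero)
        moreover have "nat (v z + int j) = nat (v z) + j"
          using vz by simp
        ultimately show ?thesis
          using nat_mem_vR by metis
      qed
      then have "cond R v \<le> nat (v z)"
        using cond_least[of "nat (v z)"] by (metis add_0_right)
      then have "int (cond R v) \<le> v z"
        using vz by linarith
      then show ?thesis
        by (simp add: val_ge_iff)
    qed simp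
  qed
qed

lemma max_ideal_eq: "max_ideal R = R \<inter> val_ge 1"
proof
  show "R \<inter> val_ge 1 \<subseteq> max_ideal R"
  proof
    fix z assume z: "z \<in> R \<inter> val_ge 1"
    show "z \<in> max_ideal R"
    proof (cases "z = 0")
      case False
      then have "v (inverse z) < 0"
        using z by (simp add: val_inverse val_ge_iff)
      then have "inverse z \<notin> R"
        using R_val_ge_0 False by (auto simp: val_ge_iff)
      then show ?thesis
        using z by (simp add: max_ideal_def)
    qed (use z in \<open>simp add: max_ideal_def\<close>)
  qed
  show "max_ideal R \<subseteq> R \<inter> val_ge 1"
  proof -
    text \<open>A unit \<open>z\<close> of value \<open>0\<close> would give \<open>1 = (1 - l z) + l z \<in> max_ideal R\<close>,
      where \<open>l \<in> R\<close> approximates \<open>1 / z\<close>.\<close>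
    have pos: "z \<in> val_ge 1" if z: "z \<in> max_ideal R" "z \<noteq> 0" for z
    proof (rule ccontr)
      assume "z \<notin> val_ge 1"
      moreover have zR: "z \<in> R"
        using z by (simp add: max_ideal_def)
      ultimately have vz: "v z = 0"
        using R_val_ge_0 z(2) unfolding subset_iff val_ge_iff by fastforce
      obtain l where l: "l \<in> R" "1 - l * z \<in> val_ge (v 1 + 1)"
        by (rule approximate_by_R_multiple[of z 1]) (use z(2) vz in simp_all)
      then have "1 - l * z \<in> R \<inter> val_ge 1"
        using l(2) R_diff[OF one_in_R R_mult[OF l(1) zR]] by simp
      then have "1 - l * z \<in> max_ideal R"
        using \<open>R \<inter> val_ge 1 \<subseteq> max_ideal R\<close> by blast
      moreover have sub: "Rsubmod R (max_ideal R)"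
        using setting_conditions(3) by (simp add: local_ring_def ideal_of_def)
      ultimately have "1 - l * z + l * z \<in> max_ideal R"
        using Rsubmod_add[OF sub _ Rsubmod_mult[OF sub l(1) z(1)]] by blast
      then show False
        using one_in_R by (simp add: max_ideal_def)
    qed
    show ?thesis
    proof
      fix z assume z: "z \<in> max_ideal R"
      then have "z \<in> R"
        by (simp add: max_ideal_def)
      moreover have "z \<in> val_ge 1"
        using pos[OF z] by (cases "z = 0") simp_all
      ultimately show "z \<in> R \<inter> val_ge 1"
        by blast
    qed
  qed
qed

lemma cond_pos: "1 \<le> cond R v"
proof (rule ccontr)
  assume "\<not> 1 \<le> cond R v"
  then have "cond R v = 0"
    by simp
  then have "val_ge 0 \<subseteq> R"
    using val_ge_cond_subset_R by simp
  then have RG: "R = val_ge 0"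
    using R_val_ge_0 by blast
  have "max_ideal R = Rspan R {unif}"
  proof
    show "max_ideal R \<subseteq> Rspan R {unif}"
    proof
      fix z assume "z \<in> max_ideal R"
      then have "z \<in> val_ge 1"
        by (simp add: max_ideal_eq)
      then have "z / unif \<in> val_ge 0"
        by (cases "z = 0") (simp_all add: val_ge_iff val_divide)
      then have "z / unif \<in> R"
        using RG by simp
      then show "z \<in> Rspan R {unif}"
        unfolding Rspan_def using unif_nonzero by (auto intro!: exI[of _ "\<lambda>_. z / unif"])
    qed
    show "Rspan R {unif} \<subseteq> max_ideal R"
    proof
      fix z assume "z \<in> Rspan R {unif}"
      then obtain c where "z = c unif * unif" "c unif \<in> val_ge 0"
        unfolding Rspan_def RG by auto
      moreover have "unif \<in> val_ge 1"
        by (simp add: val_ge_iff)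
      ultimately have "z \<in> val_ge 1"
        using val_ge_mult[of "c unif" 0 unif 1] by simp
      then show "z \<in> max_ideal R"
        unfolding max_ideal_eq using RG val_ge_antimono[of 0 1] by auto
    qed
  qed
  moreover have "unif \<in> R"
    using RG by (simp add: val_ge_iff val_unif)
  ultimately show False
    using setting_conditions(4) by (auto simp: regular_dim1_def)
qed

lemma mem_vR_of_ge_cond: "cond R v \<le> y \<Longrightarrow> y \<in> V"
  using cond_add_in_vR[of "y - cond R v"] by simp

lemma cond_minus_1_notin_vR: "cond R v - 1 \<notin> V"
proof
  assume "cond R v - 1 \<in> V"
  moreover have "\<forall>j. cond R v - 1 + j \<in> V"
  proof
    fix j
    show "cond R v - 1 + j \<in> V"
      using calculation cond_pos mem_vR_of_ge_cond[of "cond R v - 1 + j"] by (cases j) simp_all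
  qed
  ultimately have "cond R v \<le> cond R v - 1"
    using cond_least by blast
  then show False
    using cond_pos by simp
qed

lemma infinite_vR: "infinite V"
  unfolding infinite_nat_iff_unbounded_le
proof
  fix m
  show "\<exists>n\<ge>m. n \<in> V"
    using mem_vR_of_ge_cond[of "max m (cond R v)"] by (intro exI[of _ "max m (cond R v)"]) simp
qed

lemma mult_e_in_vR: "mult_e R v \<in> V"
  and mult_e_pos: "0 < mult_e R v"
  and mult_e_least: "y \<in> V \<Longrightarrow> 0 < y \<Longrightarrow> mult_e R v \<le> y"
proof -
  have "cond R v \<in> V \<and> 0 < cond R v"
    using cond_in_vR cond_pos by simp
  then have "mult_e R v \<in> V \<and> 0 < mult_e R v"
    unfolding mult_e_def by (rule LeastI)
  then show "mult_e R v \<in> V" "0 < mult_e R v"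
    by auto
  show "y \<in> V \<Longrightarrow> 0 < y \<Longrightarrow> mult_e R v \<le> y"
    unfolding mult_e_def by (rule Least_le) simp
qed

lemma mult_e_le_cond: "mult_e R v \<le> cond R v"
  using mult_e_least cond_in_vR cond_pos by simp

lemma mult_e_ge_2: "2 \<le> mult_e R v"
proof (rule ccontr)
  assume "\<not> 2 \<le> mult_e R v"
  then have e1: "mult_e R v = 1"
    using mult_e_pos by simp
  have "j \<in> V" for j
    by (induction j) (use zero_in_vR vR_add[OF _ mult_e_in_vR] e1 in auto)
  then show False
    using cond_minus_1_notin_vR by blast
qed

lemma new_values_integral_closure:
  "val_set (val_ge 0) - val_set R = int ` ({..<cond R v} - V)"
proof
  show "val_set (val_ge 0) - val_set R \<subseteq> int ` ({..<cond R v} - V)"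
  proof
    fix u assume u: "u \<in> val_set (val_ge 0) - val_set R"
    then have u0: "0 \<le> u"
      by simp
    then have "nat u \<notin> V"
      using u mem_vR_iff by simp
    then have "nat u \<in> {..<cond R v} - V"
      using mem_vR_of_ge_cond by (meson DiffI lessThan_iff not_le)
    then show "u \<in> int ` ({..<cond R v} - V)"
      using u0 by (intro image_eqI[of _ _ "nat u"]) simp_all
  qed
  show "int ` ({..<cond R v} - V) \<subseteq> val_set (val_ge 0) - val_set R"
    using mem_vR_iff by auto
qed

lemma sandwiched_R_integral_closure: "sandwiched R (val_ge 0) (int (cond R v)) 0"
  unfolding sandwiched_def using Rsubmod_R Rsubmod_val_ge R_val_ge_0 val_ge_cond_subset_R by blast

lemma delta_eq_card_gaps: "delta R = card ({..<cond R v} - V)"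
proof -
  have "delta R = card (val_set (val_ge 0) - val_set R)"
    unfolding delta_def integral_closure_eq
    by (rule len_eq_card_new_values[OF sandwiched_R_integral_closure])
  then show ?thesis
    unfolding new_values_integral_closure by (simp add: card_image)
qed

lemma nn_eq_card: "nn R v = card (V \<inter> {..<cond R v})"
  and delta_le_cond: "delta R \<le> cond R v"
proof -
  have "{..<cond R v} = (V \<inter> {..<cond R v}) \<union> ({..<cond R v} - V)"
    "(V \<inter> {..<cond R v}) \<inter> ({..<cond R v} - V) = {}"
    by auto
  then have "cond R v = card (V \<inter> {..<cond R v}) + delta R"
    unfolding delta_eq_card_gaps by (metis card_Un_disjoint card_lessThan finite_Diff finite_Int finite_lessThan)
  then show "nn R v = card (V \<inter> {..<cond R v})" "delta R \<le> cond R v"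
    unfolding nn_def by simp_all
qed

lemma sv_in_vR: "sv R v i \<in> V"
  unfolding sv_def using enumerate_in_set[OF infinite_vR] .

lemma sv_less_iff [simp]: "sv R v i < sv R v j \<longleftrightarrow> i < j"
  unfolding sv_def using infinite_vR by simp

lemma sv_le_iff [simp]: "sv R v i \<le> sv R v j \<longleftrightarrow> i \<le> j"
  unfolding sv_def using infinite_vR by simp

lemma inj_sv: "inj (sv R v)"
  unfolding sv_def using inj_enumerate[OF infinite_vR] .

lemma sv_surj: "y \<in> V \<Longrightarrow> \<exists>m. sv R v m = y"
  unfolding sv_def using range_enumerate[OF infinite_vR] by (metis rangeE)

lemma sv_Suc_le: "y \<in> V \<Longrightarrow> sv R v j < y \<Longrightarrow> sv R v (Suc j) \<le> y"
  using sv_surj by (metis Suc_leI sv_le_iff sv_less_iff)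

lemma vR_below_sv: "{y \<in> V. y < sv R v j} = sv R v ` {..<j}"
proof
  show "{y \<in> V. y < sv R v j} \<subseteq> sv R v ` {..<j}"
  proof
    fix y assume y: "y \<in> {y \<in> V. y < sv R v j}"
    then obtain m where m: "sv R v m = y"
      using sv_surj by blast
    then have "m < j"
      using y by auto
    then show "y \<in> sv R v ` {..<j}"
      using m by blast
  qed
qed (use sv_in_vR in auto)

lemma sv_nn: "sv R v (nn R v) = cond R v"
proof -
  obtain m where m: "sv R v m = cond R v"
    using sv_surj cond_in_vR by blast
  have "card {y \<in> V. y < sv R v m} = m"
    unfolding vR_below_sv using inj_sv by (simp add: card_image inj_on_subset)
  moreover have "{y \<in> V. y < sv R v m} = V \<inter> {..<cond R v}"
    using m by auto
  ultimately show ?thesis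
    using nn_eq_card m by simp
qed

lemma sv_0: "sv R v 0 = 0"
proof -
  obtain m where "sv R v m = 0"
    using sv_surj zero_in_vR by blast
  then show ?thesis
    using sv_le_iff[of 0 m] by simp
qed

section \<open>The colon chain and the invariants \<open>r_i\<close>\<close>

lemma Rfilt_eq: "Rfilt R v i = R \<inter> val_ge (int (sv R v i))"
  unfolding Rfilt_def val_ge_def by auto

lemma Rfilt_antimono: "i \<le> j \<Longrightarrow> Rfilt R v j \<subseteq> Rfilt R v i"
  unfolding Rfilt_eq using val_ge_antimono[of "int (sv R v i)" "int (sv R v j)"] by auto

lemma val_ge_cond_subset_Rfilt: "i \<le> nn R v \<Longrightarrow> val_ge (int (cond R v)) \<subseteq> Rfilt R v i"
  using val_ge_antimono[of "int (sv R v i)" "int (cond R v)"] val_ge_cond_subset_R sv_nn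
  unfolding Rfilt_eq by (metis Int_subset_iff of_nat_le_iff sv_le_iff subset_refl)

lemma Rsubmod_colon: "Rsubmod R (colon R N)"
  unfolding Rsubmod_def colon_def
  by (auto simp: zero_in_R R_add R_mult distrib_right mult.assoc)

lemma R_subset_colon: "N \<subseteq> R \<Longrightarrow> R \<subseteq> colon R N"
  unfolding colon_def using R_mult by auto

lemma colon_subset_val_ge:
  assumes "y \<in> N" "y \<noteq> 0"
  shows "colon R N \<subseteq> val_ge (- v y)"
proof
  fix z assume "z \<in> colon R N"
  then have "z * y \<in> val_ge 0"
    using assms(1) R_val_ge_0 unfolding colon_def by blast
  then show "z \<in> val_ge (- v y)"
    using assms(2) val_mult[of z y] by (cases "z = 0") (auto simp: val_ge_iff)
qed

abbreviation colon_Rfilt :: "nat \<Rightarrow> 'a set" where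
  "colon_Rfilt i \<equiv> colon R (Rfilt R v i)"

lemma colon_Rfilt_mono: "i \<le> j \<Longrightarrow> colon_Rfilt i \<subseteq> colon_Rfilt j"
  unfolding colon_def using Rfilt_antimono by blast

lemma colon_Rfilt_subset_val_ge:
  assumes "i \<le> nn R v"
  shows "colon_Rfilt i \<subseteq> val_ge (- int (cond R v))"
proof -
  have "unif powi int (cond R v) \<in> val_ge (int (cond R v))"
    by (rule unif_power_int_val_ge)
  then have "unif powi int (cond R v) \<in> Rfilt R v i"
    using val_ge_cond_subset_Rfilt[OF assms] by blast
  then show ?thesis
    using colon_subset_val_ge[of "unif powi int (cond R v)"] by simp
qed

lemma sandwiched_colon_Rfilt:
  "i \<le> j \<Longrightarrow> j \<le> nn R v \<Longrightarrow>
    sandwiched (colon_Rfilt i) (colon_Rfilt j) (int (cond R v)) (- int (cond R v))"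
  unfolding sandwiched_def
  using Rsubmod_colon colon_Rfilt_mono colon_Rfilt_subset_val_ge
    val_ge_cond_subset_R R_subset_colon[of "Rfilt R v i"]
  by (auto simp: Rfilt_eq)

lemma colon_Rfilt_0: "colon_Rfilt 0 = R"
proof
  show "colon_Rfilt 0 \<subseteq> R"
    unfolding colon_def Rfilt_eq sv_0 using one_in_R R_val_ge_0 by force
qed (use R_subset_colon[of "Rfilt R v 0"] in \<open>auto simp: Rfilt_eq\<close>)

text \<open>An element of negative value in \<open>colon R (val_ge c)\<close> would map some element of
  \<open>val_ge c\<close> to the gap \<open>c - 1\<close>.\<close>
lemma colon_Rfilt_nn: "colon_Rfilt (nn R v) = val_ge 0"
proof
  have Rf: "Rfilt R v (nn R v) = val_ge (int (cond R v))"
    unfolding Rfilt_eq sv_nn using val_ge_cond_subset_R by blast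
  show "val_ge 0 \<subseteq> colon_Rfilt (nn R v)"
    unfolding Rf colon_def using val_ge_mult[of _ 0 _ "int (cond R v)"] val_ge_cond_subset_R by auto
  show "colon_Rfilt (nn R v) \<subseteq> val_ge 0"
  proof
    fix z assume z: "z \<in> colon_Rfilt (nn R v)"
    show "z \<in> val_ge 0"
    proof (rule ccontr)
      assume "z \<notin> val_ge 0"
      then have z0: "z \<noteq> 0" and vz: "v z < 0"
        by (auto simp: val_ge_iff)
      define w where "w = unif powi (int (cond R v) - 1 - v z)"
      have "w \<in> val_ge (int (cond R v))"
        using vz by (simp add: w_def val_ge_iff)
      then have "z * w \<in> R"
        using z unfolding Rf colon_def by blast
      moreover have "z * w \<noteq> 0" "v (z * w) = int (cond R v - 1)"
        using z0 cond_pos val_mult[of z w] by (auto simp: w_def)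
      ultimately have "int (cond R v - 1) \<in> val_set R"
        unfolding val_set_iff by blast
      then show False
        using mem_vR_iff cond_minus_1_notin_vR by blast
    qed
  qed
qed

lemma ri_eq_card:
  "1 \<le> i \<Longrightarrow> i \<le> nn R v \<Longrightarrow>
    ri R v i = card (val_set (colon_Rfilt i) - val_set (colon_Rfilt (i - 1)))"
  unfolding ri_def by (rule len_eq_card_new_values[OF sandwiched_colon_Rfilt]) simp_all

lemma sum_ri_eq_card:
  "j \<le> m \<Longrightarrow> m \<le> nn R v \<Longrightarrow>
    (\<Sum>i\<in>{Suc j..m}. ri R v i) = card (val_set (colon_Rfilt m) - val_set (colon_Rfilt j))"
proof (induction m)
  case (Suc m)
  show ?case
  proof (cases "j = Suc m")
    case False
    then have jm: "j \<le> m"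
      using Suc.prems by simp
    have fin: "finite (val_set (colon_Rfilt (Suc m)) - val_set (colon_Rfilt j))"
      using sandwiched_colon_Rfilt[of j "Suc m"] Suc.prems finite_new_values
      by (auto simp: sandwiched_def)
    have "val_set (colon_Rfilt j) \<subseteq> val_set (colon_Rfilt m)"
      "val_set (colon_Rfilt m) \<subseteq> val_set (colon_Rfilt (Suc m))"
      using val_set_mono colon_Rfilt_mono jm by auto
    then have split: "val_set (colon_Rfilt (Suc m)) - val_set (colon_Rfilt j) =
        (val_set (colon_Rfilt (Suc m)) - val_set (colon_Rfilt m)) \<union>
        (val_set (colon_Rfilt m) - val_set (colon_Rfilt j))"
      by auto
    have "card (val_set (colon_Rfilt (Suc m)) - val_set (colon_Rfilt j)) =
        card (val_set (colon_Rfilt (Suc m)) - val_set (colon_Rfilt m)) +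
        card (val_set (colon_Rfilt m) - val_set (colon_Rfilt j))"
      using fin unfolding split by (intro card_Un_disjoint) auto
    moreover have "{Suc j..Suc m} = insert (Suc m) {Suc j..m}"
      using jm by auto
    ultimately show ?thesis
      using Suc jm ri_eq_card[of "Suc m"] by simp
  qed simp
qed simp

lemma sum_ri_eq_delta: "(\<Sum>i\<in>{1..nn R v}. ri R v i) = delta R"
proof -
  have "(\<Sum>i\<in>{Suc 0..nn R v}. ri R v i) = card (val_set (val_ge 0) - val_set R)"
    using sum_ri_eq_card[of 0 "nn R v"] by (simp add: colon_Rfilt_0 colon_Rfilt_nn)
  then show ?thesis
    unfolding new_values_integral_closure delta_eq_card_gaps by (simp add: card_image)
qed

lemma R_val_gt_sv_subset_Rfilt_Suc: "R \<inter> val_ge (int (sv R v j) + 1) \<subseteq> Rfilt R v (Suc j)"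
proof
  fix a assume a: "a \<in> R \<inter> val_ge (int (sv R v j) + 1)"
  show "a \<in> Rfilt R v (Suc j)"
  proof (cases "a = 0")
    case False
    then have "nat (v a) \<in> V" "sv R v j < nat (v a)"
      using a nat_mem_vR[of "v a"] by (auto simp: val_set_iff val_ge_iff)
    then have "int (sv R v (Suc j)) \<le> v a"
      using sv_Suc_le by fastforce
    then show ?thesis
      using a by (simp add: Rfilt_eq val_ge_iff)
  qed (simp add: Rfilt_eq zero_in_R)
qed

lemma ri_pos:
  assumes i: "1 \<le> i" "i \<le> nn R v"
  shows "1 \<le> ri R v i"
proof -
  define u where "u = int (cond R v) - 1 - int (sv R v (i - 1))"
  have "unif powi u * y \<in> R" if "y \<in> Rfilt R v i" for y
  proof -
    have "sv R v (i - 1) < sv R v i"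
      using i by simp
    then have "int (cond R v) \<le> u + int (sv R v i)"
      unfolding u_def by linarith
    moreover have "unif powi u * y \<in> val_ge (u + int (sv R v i))"
      using that val_ge_mult[OF unif_power_int_val_ge, of y] by (simp add: Rfilt_eq)
    ultimately show ?thesis
      using val_ge_antimono val_ge_cond_subset_R by blast
  qed
  then have in_i: "u \<in> val_set (colon_Rfilt i)"
    unfolding val_set_iff colon_def by (intro bexI[of _ "unif powi u"]) auto
  have "u \<notin> val_set (colon_Rfilt (i - 1))"
  proof
    assume "u \<in> val_set (colon_Rfilt (i - 1))"
    then obtain w where w: "w \<in> colon_Rfilt (i - 1)" "w \<noteq> 0" "v w = u"
      unfolding val_set_iff by blast
    obtain y where y: "y \<in> R" "y \<noteq> 0" "v y = int (sv R v (i - 1))"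
      using sv_in_vR[of "i - 1"] unfolding mem_vR_iff val_set_iff by blast
    then have "y \<in> Rfilt R v (i - 1)"
      by (simp add: Rfilt_eq val_ge_iff)
    then have "w * y \<in> R"
      using w(1) unfolding colon_def by blast
    moreover have "w * y \<noteq> 0" "v (w * y) = int (cond R v - 1)"
      using w y val_mult[of w y] cond_pos by (auto simp: u_def)
    ultimately have "int (cond R v - 1) \<in> val_set R"
      unfolding val_set_iff by blast
    then show False
      using mem_vR_iff cond_minus_1_notin_vR by blast
  qed
  then have "val_set (colon_Rfilt i) - val_set (colon_Rfilt (i - 1)) \<noteq> {}"
    using in_i by blast
  moreover have "finite (val_set (colon_Rfilt i) - val_set (colon_Rfilt (i - 1)))"
    using sandwiched_colon_Rfilt[of "i - 1" i] i finite_new_values by (auto simp: sandwiched_def)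
  ultimately show ?thesis
    using ri_eq_card[OF i] by (simp add: Suc_le_eq card_gt_0_iff)
qed

lemma sandwiched_colon_max_ideal:
  "sandwiched R (colon R (max_ideal R)) (int (cond R v)) (- int (cond R v))"
proof -
  have "unif powi int (cond R v) \<in> val_ge (int (cond R v))"
    by (rule unif_power_int_val_ge)
  then have "unif powi int (cond R v) \<in> R"
    using val_ge_cond_subset_R by blast
  moreover have "unif powi int (cond R v) \<in> val_ge 1"
    using cond_pos by (simp add: val_ge_iff)
  ultimately have "unif powi int (cond R v) \<in> max_ideal R"
    by (simp add: max_ideal_eq)
  then have "colon R (max_ideal R) \<subseteq> val_ge (- int (cond R v))"
    using colon_subset_val_ge[of "unif powi int (cond R v)"] by simp
  moreover have "R \<subseteq> colon R (max_ideal R)"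
    by (rule R_subset_colon) (simp add: max_ideal_eq)
  ultimately show ?thesis
    unfolding sandwiched_def using Rsubmod_R Rsubmod_colon val_ge_cond_subset_R by blast
qed

lemma ctype_eq_card: "ctype R = card (val_set (colon R (max_ideal R)) - val_set R)"
  unfolding ctype_def by (rule len_eq_card_new_values[OF sandwiched_colon_max_ideal])

text \<open>Lowering the order of the test elements from \<open>s_i\<close> to \<open>s_(i-1)\<close> only adds elements
  of value exactly \<open>s_(i-1)\<close>, and these are \<open>R\<close>-multiples of \<open>y\<close> modulo \<open>Rfilt R v i\<close>.\<close>
lemma mem_colon_Rfilt_pred:
  assumes i: "1 \<le> i" and y: "y \<in> R" "y \<noteq> 0" "v y = int (sv R v (i - 1))"
    and w: "w \<in> colon_Rfilt i" "y * w \<in> R"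
  shows "w \<in> colon_Rfilt (i - 1)"
  unfolding colon_def
proof (intro CollectI ballI)
  fix a assume a: "a \<in> Rfilt R v (i - 1)"
  have "Suc (i - 1) = i"
    using i by simp
  note gt_Rfilt = R_val_gt_sv_subset_Rfilt_Suc[of "i - 1", unfolded this]
  show "w * a \<in> R"
  proof (cases "a \<in> Rfilt R v i")
    case True
    then show ?thesis
      using w(1) unfolding colon_def by blast
  next
    case False
    have aR: "a \<in> R" and a_ge: "a \<in> val_ge (int (sv R v (i - 1)))"
      using a by (simp_all add: Rfilt_eq)
    have "a \<notin> val_ge (int (sv R v (i - 1)) + 1)"
      using False aR gt_Rfilt by blast
    then have a0: "a \<noteq> 0" and "v a \<le> int (sv R v (i - 1))"
      by (auto simp: val_ge_iff)
    with a_ge have va: "v a = v y"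
      using y(3) by (simp add: val_ge_iff)
    obtain l where l: "l \<in> R" "a - l * y \<in> val_ge (v a + 1)"
      using approximate_by_R_multiple[OF y(2) a0 va[symmetric]] .
    have "a - l * y \<in> R"
      using a l(1) y(1) by (simp add: Rfilt_eq R_diff R_mult)
    moreover have "a - l * y \<in> val_ge (int (sv R v (i - 1)) + 1)"
      using l(2) va y(3) by simp
    ultimately have "a - l * y \<in> Rfilt R v i"
      using gt_Rfilt by blast
    then have "w * (a - l * y) \<in> R"
      using w(1) unfolding colon_def by blast
    moreover have "w * a = w * (a - l * y) + l * (y * w)"
      by (simp add: algebra_simps)
    ultimately show ?thesis
      using R_add R_mult[OF l(1) w(2)] by simp
  qed
qed

lemma scale_colon_Rfilt_subset_colon_max_ideal:
  assumes i: "1 \<le> i" and y: "y \<in> R" "v y = int (sv R v (i - 1))"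
  shows "y *o colon_Rfilt i \<subseteq> colon R (max_ideal R)"
proof
  have "Suc (i - 1) = i"
    using i by simp
  note gt_Rfilt = R_val_gt_sv_subset_Rfilt_Suc[of "i - 1", unfolded this]
  fix z assume "z \<in> y *o colon_Rfilt i"
  then obtain w where w: "w \<in> colon_Rfilt i" "z = y * w"
    unfolding elt_set_times_def by blast
  have "y * m \<in> Rfilt R v i" if "m \<in> max_ideal R" for m
  proof -
    have "y * m \<in> R \<inter> val_ge (int (sv R v (i - 1)) + 1)"
      using that y val_ge_mult[of y "v y" m 1] R_mult by (auto simp: max_ideal_eq val_ge_iff)
    then show ?thesis
      using gt_Rfilt by blast
  qed
  then show "z \<in> colon R (max_ideal R)"
    using w unfolding colon_def by (simp add: mult.assoc mult.left_commute)
qed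

lemma sandwiched_scale_colon_Rfilt:
  assumes i: "1 \<le> i" "i \<le> nn R v" and y: "y \<in> R" "y \<noteq> 0"
  shows "sandwiched (y *o colon_Rfilt (i - 1)) (y *o colon_Rfilt i)
    (int (cond R v) + v y) (- int (cond R v))"
  unfolding sandwiched_def
proof (intro conjI)
  show "Rsubmod R (y *o colon_Rfilt (i - 1))" "Rsubmod R (y *o colon_Rfilt i)"
    by (simp_all add: Rsubmod_scale Rsubmod_colon)
  show "y *o colon_Rfilt (i - 1) \<subseteq> y *o colon_Rfilt i"
    using colon_Rfilt_mono[of "i - 1" i] by (auto simp: elt_set_times_def)
  show "val_ge (int (cond R v) + v y) \<subseteq> y *o colon_Rfilt (i - 1)"
  proof
    fix z assume "z \<in> val_ge (int (cond R v) + v y)"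
    then have "z / y \<in> val_ge (int (cond R v))"
      using y(2) by (cases "z = 0") (simp_all add: val_ge_iff val_divide)
    then have "z / y \<in> colon_Rfilt (i - 1)"
      using val_ge_cond_subset_R R_subset_colon[of "Rfilt R v (i - 1)"] by (auto simp: Rfilt_eq)
    then show "z \<in> y *o colon_Rfilt (i - 1)"
      unfolding elt_set_times_def using y(2) by (intro CollectI bexI[of _ "z / y"]) simp_all
  qed
  show "y *o colon_Rfilt i \<subseteq> val_ge (- int (cond R v))"
  proof
    fix z assume "z \<in> y *o colon_Rfilt i"
    then obtain w where "w \<in> val_ge (- int (cond R v))" "z = y * w"
      using colon_Rfilt_subset_val_ge[OF i(2)] by (auto simp: elt_set_times_def)
    then show "z \<in> val_ge (- int (cond R v))"
      using val_ge_mult[of y 0 w] y(1) R_val_ge_0 by auto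
  qed
qed

text \<open>Multiplication by an element of value \<open>s_(i-1)\<close> embeds the \<open>i\<close>-th quotient of the
  chain of colons into \<open>colon R (max_ideal R) / R\<close>.\<close>
lemma ri_le_ctype:
  assumes i: "1 \<le> i" "i \<le> nn R v"
  shows "ri R v i \<le> ctype R"
proof -
  obtain y where y: "y \<in> R" "y \<noteq> 0" "v y = int (sv R v (i - 1))"
    using sv_in_vR[of "i - 1"] unfolding mem_vR_iff val_set_iff by blast
  define P where "P = y *o colon_Rfilt i"
  define P0 where "P0 = y *o colon_Rfilt (i - 1)"
  have "val_set P - val_set P0 =
      (\<lambda>u. v y + u) ` (val_set (colon_Rfilt i) - val_set (colon_Rfilt (i - 1)))"
    unfolding P_def P0_def val_set_scale[OF y(2)] by (simp add: image_set_diff)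
  then have "ri R v i = card (val_set P - val_set P0)"
    using ri_eq_card[OF i] by (simp add: card_image)
  also have "\<dots> \<le> card (val_set (colon R (max_ideal R)) - val_set R)"
  proof (rule card_new_values_le_of_embedding)
    show "sandwiched P0 P (int (cond R v) + v y) (- int (cond R v))"
      unfolding P_def P0_def by (rule sandwiched_scale_colon_Rfilt[OF i y(1,2)])
    show "P \<subseteq> colon R (max_ideal R)"
      unfolding P_def by (rule scale_colon_Rfilt_subset_colon_max_ideal[OF i(1) y(1,3)])
    have "y \<in> Rfilt R v (i - 1)"
      using y by (simp add: Rfilt_eq val_ge_iff)
    then show "P0 \<subseteq> R"
      unfolding P0_def colon_def elt_set_times_def by (auto simp: mult.commute)
    show "P \<inter> R \<subseteq> P0"
      using mem_colon_Rfilt_pred[OF i(1) y] unfolding P_def P0_def elt_set_times_def by blast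
  qed (rule sandwiched_colon_max_ideal)
  finally show ?thesis
    unfolding ctype_eq_card .
qed

section \<open>The invariant \<open>k\<close>\<close>

lemma sandwiched_conductor_plus:
  assumes x: "x \<in> R"
  shows "sandwiched (x *o R + val_ge (int (cond R v))) R (int (cond R v)) 0"
  unfolding sandwiched_def
proof (intro conjI)
  have "x *o R \<subseteq> R"
    using R_mult[OF x] by (auto simp: elt_set_times_def)
  then show "x *o R + val_ge (int (cond R v)) \<subseteq> R"
    using plus_subset[OF Rsubmod_R] val_ge_cond_subset_R by blast
  show "val_ge (int (cond R v)) \<subseteq> x *o R + val_ge (int (cond R v))"
    using set_zero_plus2[of "x *o R"] zero_in_R by (auto simp: elt_set_times_def)
qed (simp_all add: Rsubmod_plus Rsubmod_scale Rsubmod_R Rsubmod_val_ge R_val_ge_0)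

lemma val_set_conductor_plus_below:
  assumes x: "x \<noteq> 0" "v x = int (mult_e R v)" and u: "u < int (cond R v)"
  shows "u \<in> val_set (x *o R + val_ge (int (cond R v))) \<longleftrightarrow> u - int (mult_e R v) \<in> val_set R"
proof
  assume "u \<in> val_set (x *o R + val_ge (int (cond R v)))"
  then have "u \<in> val_set (x *o R)"
    using val_set_plus_val_ge[of "val_ge (int (cond R v))" _ "x *o R"] u by force
  then show "u - int (mult_e R v) \<in> val_set R"
    using val_set_scale[OF x(1)] x(2) by auto
next
  assume "u - int (mult_e R v) \<in> val_set R"
  then obtain z where z: "z \<in> R" "z \<noteq> 0" "v z = u - int (mult_e R v)"
    unfolding val_set_iff by blast
  have "x * z \<in> x *o R + val_ge (int (cond R v))"
    using set_zero_plus2[of "val_ge (int (cond R v))" "x *o R"] z(1)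
    by (auto simp: add.commute elt_set_times_def)
  moreover have "x * z \<noteq> 0" "v (x * z) = u"
    using z x val_mult[of x z] by auto
  ultimately show "u \<in> val_set (x *o R + val_ge (int (cond R v)))"
    unfolding val_set_iff by blast
qed

lemma new_values_conductor_plus:
  assumes x: "x \<in> R" "x \<noteq> 0" "v x = int (mult_e R v)"
  shows "val_set R - val_set (x *o R + val_ge (int (cond R v))) =
    int ` {y \<in> V. y < cond R v \<and> \<not> (mult_e R v \<le> y \<and> y - mult_e R v \<in> V)}"
proof -
  have high: "val_set (val_ge (int (cond R v))) \<subseteq> val_set (x *o R + val_ge (int (cond R v)))"
    using sandwiched_conductor_plus[OF x(1)] val_set_mono by (simp add: sandwiched_def)
  have "val_set R - val_set (x *o R + val_ge (int (cond R v))) =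
      {u \<in> val_set R. u < int (cond R v) \<and> u - int (mult_e R v) \<notin> val_set R}"
  proof (intro equalityI subsetI)
    fix u assume u: "u \<in> val_set R - val_set (x *o R + val_ge (int (cond R v)))"
    then have "u \<notin> val_set (val_ge (int (cond R v)))"
      using high by blast
    then have "u < int (cond R v)"
      by simp
    then show "u \<in> {u \<in> val_set R. u < int (cond R v) \<and> u - int (mult_e R v) \<notin> val_set R}"
      using u val_set_conductor_plus_below[OF x(2,3)] by simp
  qed (use val_set_conductor_plus_below[OF x(2,3)] in simp)
  also have "\<dots> = int ` {y \<in> V. y < cond R v \<and> \<not> (mult_e R v \<le> y \<and> y - mult_e R v \<in> V)}"
  proof (intro equalityI subsetI)
    fix u assume u: "u \<in> {u \<in> val_set R. u < int (cond R v) \<and> u - int (mult_e R v) \<notin> val_set R}"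
    then have "0 \<le> u"
      using val_set_lower_bound[OF R_val_ge_0] by blast
    then obtain y where "u = int y"
      using nonneg_int_cases by blast
    then show "u \<in> int ` {y \<in> V. y < cond R v \<and> \<not> (mult_e R v \<le> y \<and> y - mult_e R v \<in> V)}"
      using u by (auto simp: mem_vR_iff of_nat_diff)
  next
    fix u assume "u \<in> int ` {y \<in> V. y < cond R v \<and> \<not> (mult_e R v \<le> y \<and> y - mult_e R v \<in> V)}"
    then obtain y where y: "y \<in> V" "y < cond R v" "\<not> (mult_e R v \<le> y \<and> y - mult_e R v \<in> V)"
      and u: "u = int y"
      by blast
    have "int y - int (mult_e R v) \<notin> val_set R"
    proof
      assume w: "int y - int (mult_e R v) \<in> val_set R"
      then have "mult_e R v \<le> y"
        using val_set_lower_bound[OF R_val_ge_0] by fastforce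
      then show False
        using w y(3) mem_vR_iff by (simp add: of_nat_diff)
    qed
    then show "u \<in> {u \<in> val_set R. u < int (cond R v) \<and> u - int (mult_e R v) \<notin> val_set R}"
      using y u mem_vR_iff by simp
  qed
  finally show ?thesis .
qed

lemma kk_eq_card:
  assumes x: "x \<in> max_ideal R" "x \<noteq> 0" "v x = int (mult_e R v)"
  shows "kk R x = card {y \<in> V. cond R v - mult_e R v \<le> y \<and> y < cond R v}"
proof -
  have xR: "x \<in> R"
    using x(1) by (simp add: max_ideal_eq)
  have "{a + x * r |a r. a \<in> conductor R \<and> r \<in> R} = x *o R + val_ge (int (cond R v))"
  proof (intro equalityI subsetI)
    fix z assume "z \<in> {a + x * r |a r. a \<in> conductor R \<and> r \<in> R}"
    then obtain a r where "z = x * r + a" "a \<in> val_ge (int (cond R v))" "r \<in> R"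
      unfolding conductor_eq by (auto simp: add.commute)
    then show "z \<in> x *o R + val_ge (int (cond R v))"
      by (simp add: set_plus_intro set_times_intro2)
  next
    fix z assume "z \<in> x *o R + val_ge (int (cond R v))"
    then obtain r a where "z = x * r + a" "r \<in> R" "a \<in> val_ge (int (cond R v))"
      by (auto elim!: set_plus_elim simp: elt_set_times_def)
    then show "z \<in> {a + x * r |a r. a \<in> conductor R \<and> r \<in> R}"
      unfolding conductor_eq by (intro CollectI exI[of _ a] exI[of _ r]) (simp add: add.commute)
  qed
  then have "kk R x = card (val_set R - val_set (x *o R + val_ge (int (cond R v))))"
    unfolding kk_def using len_eq_card_new_values[OF sandwiched_conductor_plus[OF xR]] by simp
  also have "\<dots> = card {y \<in> V. y < cond R v \<and> \<not> (mult_e R v \<le> y \<and> y - mult_e R v \<in> V)}"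
    unfolding new_values_conductor_plus[OF xR x(2,3)] by (simp add: card_image)
  also have "\<dots> = card {y \<in> V. cond R v - mult_e R v \<le> y \<and> y < cond R v}"
    by (rule card_unshifted_eq_card_top[OF mult_e_le_cond vR_add[OF _ mult_e_in_vR]])
  finally show ?thesis .
qed

lemma least_above_cond_minus_e:
  assumes i0: "sv R v (i0 - 1) = (LEAST y. y \<in> V \<and> int (cond R v) - int (mult_e R v) \<le> int y)"
  shows "cond R v - mult_e R v \<le> sv R v (i0 - 1)"
    and "\<And>y. y \<in> V \<Longrightarrow> cond R v - mult_e R v \<le> y \<Longrightarrow> sv R v (i0 - 1) \<le> y"
proof -
  have "cond R v \<in> V \<and> int (cond R v) - int (mult_e R v) \<le> int (cond R v)"
    using cond_in_vR by simp
  then have "int (cond R v) - int (mult_e R v) \<le> int (sv R v (i0 - 1))"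
    unfolding i0 by (rule LeastI2_ex[OF exI]) simp
  then show "cond R v - mult_e R v \<le> sv R v (i0 - 1)"
    by linarith
  fix y assume "y \<in> V" "cond R v - mult_e R v \<le> y"
  then have "y \<in> V \<and> int (cond R v) - int (mult_e R v) \<le> int y"
    using mult_e_le_cond by linarith
  then show "sv R v (i0 - 1) \<le> y"
    unfolding i0 by (rule Least_le)
qed

lemma card_top_eq_card:
  assumes i0: "1 \<le> i0" "i0 \<le> nn R v"
    and least: "sv R v (i0 - 1) = (LEAST y. y \<in> V \<and> int (cond R v) - int (mult_e R v) \<le> int y)"
  shows "card {y \<in> V. cond R v - mult_e R v \<le> y \<and> y < cond R v} = card {i0..nn R v}"
proof -
  note bounds = least_above_cond_minus_e[OF least]
  have "{y \<in> V. cond R v - mult_e R v \<le> y \<and> y < cond R v} = sv R v ` {i0 - 1..<nn R v}"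
  proof
    show "{y \<in> V. cond R v - mult_e R v \<le> y \<and> y < cond R v} \<subseteq> sv R v ` {i0 - 1..<nn R v}"
    proof
      fix y assume "y \<in> {y \<in> V. cond R v - mult_e R v \<le> y \<and> y < cond R v}"
      then have y: "y \<in> V" "cond R v - mult_e R v \<le> y" "y < cond R v"
        by simp_all
      obtain m where m: "sv R v m = y"
        using sv_surj[OF y(1)] by blast
      have "sv R v m < sv R v (nn R v)"
        using m y(3) sv_nn by simp
      moreover have "sv R v (i0 - 1) \<le> sv R v m"
        using bounds(2)[OF y(1,2)] m by simp
      ultimately have "m \<in> {i0 - 1..<nn R v}"
        unfolding sv_less_iff sv_le_iff by simp
      then show "y \<in> sv R v ` {i0 - 1..<nn R v}"
        using m by blast
    qed
    show "sv R v ` {i0 - 1..<nn R v} \<subseteq> {y \<in> V. cond R v - mult_e R v \<le> y \<and> y < cond R v}"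
    proof
      fix y assume "y \<in> sv R v ` {i0 - 1..<nn R v}"
      then obtain m where m: "i0 - 1 \<le> m" "m < nn R v" "y = sv R v m"
        by auto
      have "sv R v m < sv R v (nn R v)" and le: "sv R v (i0 - 1) \<le> sv R v m"
        using m(1,2) by simp_all
      moreover have "cond R v - mult_e R v \<le> sv R v m"
        using bounds(1) le by (rule le_trans)
      ultimately show "y \<in> {y \<in> V. cond R v - mult_e R v \<le> y \<and> y < cond R v}"
        using sv_in_vR[of m] sv_nn m(3) by simp
    qed
  qed
  then have "card {y \<in> V. cond R v - mult_e R v \<le> y \<and> y < cond R v} = card {i0 - 1..<nn R v}"
    using inj_sv by (simp add: card_image inj_on_subset)
  then show ?thesis
    using i0 by simp
qed

lemma val_ge_subset_colon_Rfilt: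
  assumes "int (cond R v) \<le> int (sv R v j) + h"
  shows "val_ge h \<subseteq> colon_Rfilt j"
proof
  fix z assume z: "z \<in> val_ge h"
  have "z * a \<in> R" if "a \<in> Rfilt R v j" for a
  proof -
    have "z * a \<in> val_ge (h + int (sv R v j))"
      using val_ge_mult[OF z] that by (simp add: Rfilt_eq)
    then show ?thesis
      using val_ge_antimono[of "int (cond R v)"] assms val_ge_cond_subset_R by (auto simp: add.commute)
  qed
  then show "z \<in> colon_Rfilt j"
    unfolding colon_def by blast
qed

text \<open>The tail of the \<open>r_i\<close> counts values of \<open>val_ge 0\<close> missing from \<open>colon_Rfilt (i0 - 1)\<close>,
  which already contains \<open>1\<close> and \<open>val_ge h\<close>.\<close>
lemma sum_ri_tail_le:
  assumes i0: "1 \<le> i0" "i0 \<le> nn R v" and h: "int (cond R v) \<le> int (sv R v (i0 - 1)) + h"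
    and "1 \<le> h"
  shows "(\<Sum>i\<in>{i0..nn R v}. int (ri R v i)) \<le> h - 1"
proof -
  have "(\<Sum>i\<in>{i0..nn R v}. ri R v i) = card (val_set (val_ge 0) - val_set (colon_Rfilt (i0 - 1)))"
    using sum_ri_eq_card[of "i0 - 1" "nn R v"] i0 colon_Rfilt_nn by simp
  also have "\<dots> \<le> card {1..<h}"
  proof (rule card_mono)
    have zero: "0 \<in> val_set (colon_Rfilt (i0 - 1))"
      using R_subset_colon[of "Rfilt R v (i0 - 1)"] one_in_R unfolding val_set_iff
      by (intro bexI[of _ 1]) (auto simp: Rfilt_eq)
    have high: "val_set (val_ge h) \<subseteq> val_set (colon_Rfilt (i0 - 1))"
      using val_set_mono[OF val_ge_subset_colon_Rfilt[OF h]] .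
    show "val_set (val_ge 0) - val_set (colon_Rfilt (i0 - 1)) \<subseteq> {1..<h}"
    proof
      fix u assume u: "u \<in> val_set (val_ge 0) - val_set (colon_Rfilt (i0 - 1))"
      then have "0 \<le> u" "u \<noteq> 0"
        using zero by auto
      moreover have "\<not> h \<le> u"
        using u high by auto
      ultimately show "u \<in> {1..<h}"
        by simp
    qed
  qed simp
  finally have "(\<Sum>i\<in>{i0..nn R v}. ri R v i) \<le> nat (h - 1)"
    by simp
  then have "int (\<Sum>i\<in>{i0..nn R v}. ri R v i) \<le> int (nat (h - 1))"
    by (simp only: of_nat_le_iff)
  moreover have "int (nat (h - 1)) = h - 1"
    using \<open>1 \<le> h\<close> by simp
  ultimately show ?thesis
    unfolding of_nat_sum by linarith
qed

lemma gaps_below_cond_in_colon_max_ideal: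
  "int ` {g. cond R v - mult_e R v \<le> g \<and> g < cond R v \<and> g \<notin> V}
    \<subseteq> val_set (colon R (max_ideal R)) - val_set R"
proof
  fix u assume "u \<in> int ` {g. cond R v - mult_e R v \<le> g \<and> g < cond R v \<and> g \<notin> V}"
  then obtain g where g: "cond R v - mult_e R v \<le> g" "g \<notin> V" "u = int g"
    by blast
  have "unif powi u * m \<in> R" if m: "m \<in> max_ideal R" for m
  proof (cases "m = 0")
    case False
    then have "nat (v m) \<in> V" "1 \<le> v m"
      using m nat_mem_vR[of "v m"] by (auto simp: max_ideal_eq val_ge_iff val_set_iff)
    then have "int (mult_e R v) \<le> v m"
      using mult_e_least[of "nat (v m)"] by linarith
    then have "unif powi u * m \<in> val_ge (int (cond R v))"
      using False g mult_e_le_cond val_mult[of "unif powi u" m] by (auto simp: val_ge_iff)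
    then show ?thesis
      using val_ge_cond_subset_R by blast
  qed (simp add: zero_in_R)
  then have "u \<in> val_set (colon R (max_ideal R))"
    unfolding val_set_iff colon_def by (intro bexI[of _ "unif powi u"]) auto
  moreover have "u \<notin> val_set R"
    using g mem_vR_iff by simp
  ultimately show "u \<in> val_set (colon R (max_ideal R)) - val_set R"
    by blast
qed

text \<open>The interval \<open>[c - e, c)\<close> splits into the elements of \<open>v(R)\<close> and gaps, which
  are values of \<open>colon R (max_ideal R)\<close> not in \<open>v(R)\<close>; \<open>c - 1\<close> is such a gap.\<close>
lemma mult_e_le_card_top_plus_ctype:
  "mult_e R v \<le> card {y \<in> V. cond R v - mult_e R v \<le> y \<and> y < cond R v} + ctype R"
  and ctype_pos: "1 \<le> ctype R"
proof -
  define G where "G = {g. cond R v - mult_e R v \<le> g \<and> g < cond R v \<and> g \<notin> V}"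
  have "card (int ` G) \<le> ctype R"
    unfolding ctype_eq_card G_def
    using gaps_below_cond_in_colon_max_ideal sandwiched_colon_max_ideal finite_new_values
    by (metis card_mono sandwiched_def)
  then have G_le: "card G \<le> ctype R"
    by (simp add: card_image)
  have "{cond R v - mult_e R v..<cond R v} =
      G \<union> {y \<in> V. cond R v - mult_e R v \<le> y \<and> y < cond R v}"
    "G \<inter> {y \<in> V. cond R v - mult_e R v \<le> y \<and> y < cond R v} = {}"
    unfolding G_def by auto
  moreover have "finite G" "finite {y \<in> V. cond R v - mult_e R v \<le> y \<and> y < cond R v}"
    unfolding G_def by (auto intro: finite_subset[of _ "{..<cond R v}"])
  ultimately have "mult_e R v = card G + card {y \<in> V. cond R v - mult_e R v \<le> y \<and> y < cond R v}"
    using mult_e_le_cond by (metis card_Un_disjoint card_atLeastLessThan diff_diff_cancel)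
  then show "mult_e R v \<le> card {y \<in> V. cond R v - mult_e R v \<le> y \<and> y < cond R v} + ctype R"
    using G_le by simp
  have "cond R v - 1 \<in> G"
    using cond_minus_1_notin_vR mult_e_pos cond_pos by (auto simp: G_def)
  then have "1 \<le> card G"
    using \<open>finite G\<close> by (metis One_nat_def Suc_leI card_gt_0_iff empty_iff)
  then show "1 \<le> ctype R"
    using G_le by simp
qed

lemma bb_eq_sum: "bb R v = (\<Sum>i\<in>{1..nn R v}. int (ctype R) - int (ri R v i))"
proof -
  have "(\<Sum>i\<in>{1..nn R v}. int (ri R v i)) = int (delta R)"
    using sum_ri_eq_delta by (simp flip: of_nat_sum)
  moreover have "int (nn R v) = int (cond R v) - int (delta R)"
    using delta_le_cond by (simp add: nn_def)
  ultimately show ?thesis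
    by (simp add: bb_def sum_subtractf)
qed

lemma sum_ri_above_i0:
  assumes i0: "1 \<le> i0" "i0 \<le> nn R v"
    and least: "sv R v (i0 - 1) = (LEAST y. y \<in> V \<and> int (cond R v) - int (mult_e R v) \<le> int y)"
  shows "(\<Sum>i\<in>{i0..nn R v}. int (ri R v i)) \<le> int (mult_e R v) - 1"
    and "(\<Sum>i\<in>{i0..nn R v}. int (ri R v i)) = int (mult_e R v) - 1 \<Longrightarrow>
      int (sv R v (i0 - 1)) = int (cond R v) - int (mult_e R v)"
proof -
  note low = least_above_cond_minus_e(1)[OF least]
  show "(\<Sum>i\<in>{i0..nn R v}. int (ri R v i)) \<le> int (mult_e R v) - 1"
    using sum_ri_tail_le[OF i0, of "int (mult_e R v)"] low mult_e_le_cond mult_e_pos by linarith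
  assume eq: "(\<Sum>i\<in>{i0..nn R v}. int (ri R v i)) = int (mult_e R v) - 1"
  show "int (sv R v (i0 - 1)) = int (cond R v) - int (mult_e R v)"
  proof (rule ccontr)
    assume "int (sv R v (i0 - 1)) \<noteq> int (cond R v) - int (mult_e R v)"
    then have "int (cond R v) \<le> int (sv R v (i0 - 1)) + (int (mult_e R v) - 1)"
      using low mult_e_le_cond by linarith
    then show False
      using sum_ri_tail_le[OF i0] eq mult_e_ge_2 by fastforce
  qed
qed

end

theorem proposition2p1:
  fixes R :: "'a::field set" and v :: "'a \<Rightarrow> int" and x :: 'a and i0 :: nat
  assumes S: "setting R v"
    and i0: "i0 \<in> {1..nn R v}"
    and i0min: "sv R v (i0 - 1) =
                  (LEAST y. y \<in> vR R v \<and> int y \<ge> int (cond R v) - int (mult_e R v))"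
    and x: "x \<in> max_ideal R" "x \<noteq> 0" "v x = int (mult_e R v)"
  defines "b \<equiv> bb R v" and "r \<equiv> int (ctype R)" and "e \<equiv> int (mult_e R v)"
    and "k \<equiv> int (kk R x)" and "n \<equiv> nn R v"
    and "B \<equiv> {i0..nn R v}" and "A \<equiv> {1..nn R v} - {i0..nn R v}"
    and "rr \<equiv> (\<lambda>i. int (ri R v i))"
  shows
    "((e - r - 1) * (r - 1) \<le> r * k - e + 1 \<and>
      r * k - e + 1 \<le> b - (\<Sum>i\<in>A. r - rr i) \<and>
      b - (\<Sum>i\<in>A. r - rr i) \<le> k * (r - 1))
   \<and> (b = (k - 1) * (r - 1) + (\<Sum>i\<in>A. r - rr i) \<longleftrightarrow>
        (\<Sum>i\<in>B. rr i) = e - 1 \<and> k = e - r)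
   \<and> (b = k * (r - 1) + (\<Sum>i\<in>A. r - rr i) \<longleftrightarrow> (\<forall>i\<in>B. rr i = 1))
   \<and> ((b = (e - r - 1) * (r - 1) \<longleftrightarrow> b = (k - 1) * (r - 1))
      \<and> (b = (k - 1) * (r - 1) \<longleftrightarrow>
           e - r = k \<and> (\<Sum>i\<in>B. rr i) = e - 1 \<and> (\<forall>i\<in>A. rr i = r))
      \<and> (b = (e - r - 1) * (r - 1) \<longrightarrow>
           int (sv R v (i0 - 1)) = int (cond R v) - e))
   \<and> b \<ge> (r - 1) * int (card {i\<in>{1..n}. rr i = 1})"
proof -
  interpret analytically_irreducible R v
    by (rule analytically_irreducible.intro[OF S])
  have i0': "1 \<le> i0" "i0 \<le> nn R v"
    using i0 by auto
  have k_eq: "k = int (card B)"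
    unfolding k_def B_def using kk_eq_card[OF x] card_top_eq_card[OF i0' i0min] by simp
  show ?thesis
  proof (rule proposition_arith)
    show "A \<union> B = {1..n}" "A \<inter> B = {}"
      using i0' by (auto simp: A_def B_def n_def)
    show "b = (\<Sum>i\<in>{1..n}. r - rr i)"
      unfolding b_def r_def rr_def n_def by (rule bb_eq_sum)
    show "\<And>i. i \<in> {1..n} \<Longrightarrow> 1 \<le> rr i \<and> rr i \<le> r"
      using ri_pos ri_le_ctype by (force simp: rr_def r_def n_def)
    show "(\<Sum>i\<in>B. rr i) \<le> e - 1"
      and "(\<Sum>i\<in>B. rr i) = e - 1 \<Longrightarrow> int (sv R v (i0 - 1)) = int (cond R v) - e"
      using sum_ri_above_i0[OF i0' i0min] by (simp_all add: B_def rr_def e_def)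
    show "e \<le> k + r"
      using mult_e_le_card_top_plus_ctype card_top_eq_card[OF i0' i0min] k_eq
      by (simp add: e_def r_def B_def)
    show "1 \<le> r"
      using ctype_pos by (simp add: r_def)
  qed (use k_eq in simp_all)
qed

end
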